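(* Let $x:M^n\to\mathbb{R}^{n+1}$ be a locally strongly convex centroaffine hypersurface, and suppose there is a non-constant smooth function $\mu$ on $M^n$ such that $(\hat\nabla_ZK)(X,Y)=\mu\big(h(X,Y)Z+h(X,Z)Y+h(Y,Z)X\big)$ for all tangent vectors $X,Y,Z$ at every point. Let $p\in M^n$ be a point with $d\mu_p\ne0$, and let $\{e_1,\dots,e_n\}$ be an $h$-orthonormal basis of $T_pM^n$ such that $e_1$ maximizes $f(u)=h(K_uu,u)$ over the $h$-unit vectors $u\in T_pM^n$, $K_{e_1}e_i=\lambda_ie_i$ for all $i$, and $\lambda_1\ge2\lambda_i$ for $i\ge2$ (with $f(e_i)=0$ if $\lambda_1=2\lambda_i$), the $e_2,\dots,e_n$ being ordered so that $\lambda_2\le\dots\le\lambda_n$. Then there is no integer $m$ with $2\le m\le n-1$ such that $\lambda_2=\dots=\lambda_m<\lambda_{m+1}=\dots=\lambda_n$.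
   Context: A centroaffine hypersurface is an immersion $x:M^n\to\mathbb{R}^{n+1}$ whose position vector is everywhere transversal to the tangent space; with $D$ the flat connection of $\mathbb{R}^{n+1}$, $D_Xx_*(Y)=x_*(\nabla_XY)+h(X,Y)(-\varepsilon x)$, $\varepsilon=\pm1$, defines the induced connection $\nabla$ and centroaffine metric $h$. Locally strongly convex means $h$ definite, and $\varepsilon$ is chosen so that $h$ is positive definite. $\hat\nabla$ is the Levi-Civita connection of $h$ and $K_XY=\nabla_XY-\hat\nabla_XY$ the difference tensor. *)

theory Defs
  imports "HOL-Analysis.Analysis"
begin

text \<open>The manifold M is
represented by an open parameter domain U in real^'n (a chart around p); all
geometric objects are given by their components in the coordinate frame
d_1, ..., d_n.\<close>

definition pd :: "'n::finite \<Rightarrow> (real^'n \<Rightarrow> 'a::real_normed_vector) \<Rightarrow> real^'n \<Rightarrow> 'a" where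
  "pd i f p = frechet_derivative f (at p) (axis i 1)"

fun iter_pd :: "'n::finite list \<Rightarrow> (real^'n \<Rightarrow> 'a::real_normed_vector) \<Rightarrow> real^'n \<Rightarrow> 'a" where
  "iter_pd [] f = f"
| "iter_pd (i # is) f = pd i (iter_pd is f)"

definition smooth_on :: "(real^'n::finite) set \<Rightarrow> (real^'n \<Rightarrow> 'a::real_normed_vector) \<Rightarrow> bool" where
  "smooth_on U f \<longleftrightarrow> (\<forall>is. iter_pd is f differentiable_on U)"

text \<open>Centroaffine hypersurface x : U \<rightarrow> R^(n+1) with induced connection
(Christoffel symbols G k i j, i.e. nabla_{d_i} d_j = sum_k G k i j d_k) and
centroaffine metric h, defined by the Gauss formula
D_{d_i} x_*(d_j) = x_*(nabla_{d_i} d_j) + h(d_i,d_j) (-eps x).\<close>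
definition centroaffine_hypersurface ::
  "(real^'n::finite) set \<Rightarrow> (real^'n \<Rightarrow> real^'m::finite) \<Rightarrow> real
   \<Rightarrow> ('n \<Rightarrow> 'n \<Rightarrow> 'n \<Rightarrow> real^'n \<Rightarrow> real) \<Rightarrow> ('n \<Rightarrow> 'n \<Rightarrow> real^'n \<Rightarrow> real) \<Rightarrow> bool" where
  "centroaffine_hypersurface U x eps G h \<longleftrightarrow>
     open U \<and> smooth_on U x \<and> CARD('m) = CARD('n) + 1 \<and> (eps = 1 \<or> eps = -1) \<and>
     (\<forall>q\<in>U. \<forall>a c. a *\<^sub>R x q + (\<Sum>k\<in>UNIV. c k *\<^sub>R pd k x q) = 0 \<longrightarrow> a = 0 \<and> (\<forall>k. c k = 0)) \<and>
     (\<forall>q\<in>U. \<forall>i j. pd i (pd j x) q =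
        (\<Sum>k\<in>UNIV. G k i j q *\<^sub>R pd k x q) + h i j q *\<^sub>R (- eps *\<^sub>R x q))"

definition positive_definite_on :: "(real^'n::finite) set \<Rightarrow> ('n \<Rightarrow> 'n \<Rightarrow> real^'n \<Rightarrow> real) \<Rightarrow> bool" where
  "positive_definite_on U h \<longleftrightarrow>
     (\<forall>q\<in>U. \<forall>v::real^'n. v \<noteq> 0 \<longrightarrow> (\<Sum>i\<in>UNIV. \<Sum>j\<in>UNIV. h i j q * v$i * v$j) > 0)"

definition levi_civita :: "(real^'n::finite) set \<Rightarrow> ('n \<Rightarrow> 'n \<Rightarrow> real^'n \<Rightarrow> real)
   \<Rightarrow> ('n \<Rightarrow> 'n \<Rightarrow> 'n \<Rightarrow> real^'n \<Rightarrow> real) \<Rightarrow> bool" where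
  "levi_civita U h hG \<longleftrightarrow>
     (\<forall>q\<in>U. \<forall>i j k. hG k i j q = hG k j i q \<and>
        pd k (h i j) q = (\<Sum>l\<in>UNIV. hG l k i q * h l j q + hG l k j q * h i l q))"

text \<open>Difference tensor K_{d_i} d_j = sum_k Kt k i j d_k.\<close>
definition diff_tensor :: "('n \<Rightarrow> 'n \<Rightarrow> 'n \<Rightarrow> real^'n::finite \<Rightarrow> real)
   \<Rightarrow> ('n \<Rightarrow> 'n \<Rightarrow> 'n \<Rightarrow> real^'n \<Rightarrow> real) \<Rightarrow> 'n \<Rightarrow> 'n \<Rightarrow> 'n \<Rightarrow> real^'n \<Rightarrow> real" where
  "diff_tensor G hG k i j q = G k i j q - hG k i j q"

text \<open>Components of (hat nabla_{d_l} K)(d_i, d_j), k-th coordinate.\<close>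
definition cov_deriv_K :: "('n \<Rightarrow> 'n \<Rightarrow> 'n \<Rightarrow> real^'n::finite \<Rightarrow> real)
   \<Rightarrow> ('n \<Rightarrow> 'n \<Rightarrow> 'n \<Rightarrow> real^'n \<Rightarrow> real) \<Rightarrow> 'n \<Rightarrow> 'n \<Rightarrow> 'n \<Rightarrow> 'n \<Rightarrow> real^'n \<Rightarrow> real" where
  "cov_deriv_K hG Kt l k i j q =
     pd l (Kt k i j) q
     + (\<Sum>m\<in>UNIV. hG k l m q * Kt m i j q)
     - (\<Sum>m\<in>UNIV. hG m l i q * Kt k m j q)
     - (\<Sum>m\<in>UNIV. hG m l j q * Kt k i m q)"

text \<open>Pointwise objects at a point p on T_pM = real^'n (coordinate vectors).\<close>
definition metric_at :: "('n::finite \<Rightarrow> 'n \<Rightarrow> real^'n \<Rightarrow> real) \<Rightarrow> real^'n \<Rightarrow> real^'n \<Rightarrow> real^'n \<Rightarrow> real" where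
  "metric_at h p u v = (\<Sum>i\<in>UNIV. \<Sum>j\<in>UNIV. h i j p * u$i * v$j)"

definition K_at :: "('n::finite \<Rightarrow> 'n \<Rightarrow> 'n \<Rightarrow> real^'n \<Rightarrow> real) \<Rightarrow> real^'n \<Rightarrow> real^'n \<Rightarrow> real^'n \<Rightarrow> real^'n" where
  "K_at Kt p u v = (\<chi> k. \<Sum>i\<in>UNIV. \<Sum>j\<in>UNIV. Kt k i j p * u$i * v$j)"

end

theory Submission
  imports Defs
begin

text \<open>Differentiating \<open>\<^bold>\<nabla>K = \<mu> S\<close>, where \<open>S(X,Y,Z) = h(X,Y)Z + h(X,Z)Y + h(Y,Z)X\<close> and
  \<open>\<^bold>\<nabla>\<close> is the Levi-Civita connection of \<open>h\<close>, once more and antisymmetrizing gives the Ricci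
  identity \<open>d\<mu>(U) S(V,\<cdot>,\<cdot>) - d\<mu>(V) S(U,\<cdot>,\<cdot>) = R(U,V)\<cdot>K\<close>, where by the Gauss equation
  \<open>R(U,V)W = \<epsilon>(h(V,W)U - h(U,W)V) - [K\<^sub>U,K\<^sub>V]W\<close>. Evaluated on the orthonormal eigenframe of
  \<open>K\<^sub>e\<^sub>1\<close> it gives \<open>d\<mu>(e\<^sub>b) = 0\<close> for \<open>b \<ge> 2\<close>, hence \<open>d\<mu>(e\<^sub>1) \<noteq> 0\<close>, and two expressions
  \<open>d\<mu>(e\<^sub>1) = (\<lambda>\<^sub>1 - 2\<lambda>\<^sub>b)(\<lambda>\<^sub>1\<lambda>\<^sub>b - \<lambda>\<^sub>b\<^sup>2 - \<epsilon>) = -(\<epsilon>\<lambda>\<^sub>b + (\<lambda>\<^sub>b - \<lambda>\<^sub>1)\<lambda>\<^sub>b\<^sup>2)\<close>.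
  Their difference is \<open>(\<lambda>\<^sub>1 - 3\<lambda>\<^sub>b)(\<lambda>\<^sub>1\<lambda>\<^sub>b - \<lambda>\<^sub>b\<^sup>2 - \<epsilon>)\<close>, so \<open>\<lambda>\<^sub>b = \<lambda>\<^sub>1/3\<close> for every \<open>b \<ge> 2\<close>:
  the \<open>\<lambda>\<^sub>b\<close> cannot form two distinct blocks. In the chart, the symmetry of mixed partial derivatives turns the Gauss formula into the
  symmetry of \<open>h\<close> and \<open>\<nabla>\<close> and the Gauss and Codazzi equations.\<close>

section \<open>Partial derivatives\<close>

lemma pd_eq_derivative:
  assumes "(f has_derivative f') (at q)"
  shows "pd i f q = f' (axis i 1)"
  using frechet_derivative_at[OF assms] by (simp add: pd_def)

lemma iter_pd_snoc: "iter_pd is (pd i f) = iter_pd (is @ [i]) f"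
  by (induction "is") auto

lemma smooth_on_pd: "smooth_on U f \<Longrightarrow> smooth_on U (pd i f)"
  unfolding smooth_on_def by (simp add: iter_pd_snoc)

lemma smooth_on_imp_differentiable_on: "smooth_on U f \<Longrightarrow> f differentiable_on U"
  unfolding smooth_on_def by (metis iter_pd.simps(1))

lemma smooth_on_imp_differentiable:
  "smooth_on U f \<Longrightarrow> open U \<Longrightarrow> q \<in> U \<Longrightarrow> f differentiable (at q)"
  using smooth_on_imp_differentiable_on differentiable_on_eq_differentiable_at by blast

lemma pd_cong:
  assumes "open U" "q \<in> U" "\<And>y. y \<in> U \<Longrightarrow> f y = g y"
  shows "pd i f q = pd i g q"
proof -
  have "(f has_derivative D) (at q) \<longleftrightarrow> (g has_derivative D) (at q)" for D
    using has_derivative_transform_within_open assms by (metis (no_types, lifting))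
  then show ?thesis by (simp add: pd_def frechet_derivative_def)
qed

lemma pd_add:
  assumes "f differentiable (at q)" "g differentiable (at q)"
  shows "pd i (\<lambda>y. f y + g y) q = pd i f q + pd i g q"
  using pd_eq_derivative[OF has_derivative_add[OF assms[unfolded frechet_derivative_works]], of i]
  by (simp add: pd_def)

lemma pd_diff:
  assumes "f differentiable (at q)" "g differentiable (at q)"
  shows "pd i (\<lambda>y. f y - g y) q = pd i f q - pd i g q"
  using pd_eq_derivative[OF has_derivative_diff[OF assms[unfolded frechet_derivative_works]], of i]
  by (simp add: pd_def)

lemma pd_mult:
  fixes f g :: "real^'n::finite \<Rightarrow> real"
  assumes "f differentiable (at q)" "g differentiable (at q)"
  shows "pd i (\<lambda>y. f y * g y) q = pd i f q * g q + f q * pd i g q"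
  using pd_eq_derivative[OF has_derivative_mult[OF assms[unfolded frechet_derivative_works]], of i]
  by (simp add: pd_def)

lemma pd_scaleR:
  fixes f :: "real^'n::finite \<Rightarrow> real"
  assumes "f differentiable (at q)" "g differentiable (at q)"
  shows "pd i (\<lambda>y. f y *\<^sub>R g y) q = pd i f q *\<^sub>R g q + f q *\<^sub>R pd i g q"
  using pd_eq_derivative[OF has_derivative_scaleR[OF assms[unfolded frechet_derivative_works]], of i]
  by (simp add: pd_def)

lemma pd_sum:
  assumes "finite A" "\<And>k. k \<in> A \<Longrightarrow> f k differentiable (at q)"
  shows "pd i (\<lambda>y. \<Sum>k\<in>A. f k y) q = (\<Sum>k\<in>A. pd i (f k) q)"
proof -
  have "\<And>k. k \<in> A \<Longrightarrow> (f k has_derivative frechet_derivative (f k) (at q)) (at q)"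
    using assms(2) frechet_derivative_works by blast
  from pd_eq_derivative[OF has_derivative_sum[OF this], where i=i] show ?thesis
    by (simp add: pd_def)
qed

lemma pd_const: "pd i (\<lambda>y. c) q = 0"
  using pd_eq_derivative[OF has_derivative_const[of c "at q"], of i] by simp

lemma pd_mult_const:
  fixes f :: "real^'n::finite \<Rightarrow> real"
  assumes "f differentiable (at q)"
  shows "pd i (\<lambda>y. f y * c) q = pd i f q * c"
  using pd_mult[OF assms differentiable_const[of c], of i] pd_const[of i c q] by simp

lemma iter_pd_diff:
  assumes U: "open U" and f: "smooth_on U f" and g: "smooth_on U g" and q: "q \<in> U"
  shows "iter_pd is (\<lambda>y. f y - g y) q = iter_pd is f q - iter_pd is g q"
  using q
proof (induction "is" arbitrary: q)
  case (Cons i "is")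
  have "iter_pd (i # is) (\<lambda>y. f y - g y) q = pd i (\<lambda>y. iter_pd is f y - iter_pd is g y) q"
    using pd_cong[OF U Cons.prems, of "iter_pd is (\<lambda>y. f y - g y)"] Cons.IH by simp
  also have "\<dots> = pd i (iter_pd is f) q - pd i (iter_pd is g) q"
    using f g Cons.prems U
    by (intro pd_diff) (auto simp: smooth_on_def differentiable_on_eq_differentiable_at[OF U])
  finally show ?case by simp
qed simp

lemma smooth_on_diff:
  assumes U: "open U" and f: "smooth_on U f" and g: "smooth_on U g"
  shows "smooth_on U (\<lambda>y. f y - g y)"
  unfolding smooth_on_def differentiable_on_eq_differentiable_at[OF U]
proof (intro allI ballI)
  fix "is" q assume q: "q \<in> U"
  have "(\<lambda>y. iter_pd is f y - iter_pd is g y) differentiable (at q)"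
    using f g q U unfolding smooth_on_def differentiable_on_eq_differentiable_at[OF U]
    by (blast intro: differentiable_diff)
  then show "iter_pd is (\<lambda>y. f y - g y) differentiable (at q)"
    using has_derivative_transform_within_open[OF _ U q] iter_pd_diff[OF U f g]
    unfolding differentiable_def by (metis (no_types, lifting))
qed

lemma has_vector_derivative_along_line:
  fixes F :: "real^'n::finite \<Rightarrow> 'v::real_normed_vector"
  assumes "F differentiable (at (c + s *\<^sub>R v))"
  shows "((\<lambda>s. F (c + s *\<^sub>R v)) has_vector_derivative frechet_derivative F (at (c + s *\<^sub>R v)) v)
           (at s within S)"
proof -
  have line: "((\<lambda>s. c + s *\<^sub>R v) has_derivative (\<lambda>h. h *\<^sub>R v)) (at s within S)"
    by (auto intro!: derivative_eq_intros)
  have "(F has_derivative frechet_derivative F (at (c + s *\<^sub>R v)))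
          (at (c + s *\<^sub>R v) within ((\<lambda>s. c + s *\<^sub>R v) ` S))"
    using assms frechet_derivative_works has_derivative_at_withinI by blast
  from has_derivative_in_compose[OF line this] show ?thesis
    using linear_frechet_derivative[OF assms] by (simp add: has_vector_derivative_def linear_scale)
qed

lemma increment_bound:
  fixes g :: "real \<Rightarrow> 'v::real_normed_vector"
  assumes t: "0 \<le> t"
    and deriv: "\<And>s. s \<in> {0..t} \<Longrightarrow> (g has_vector_derivative g' s) (at s within {0..t})"
    and bound: "\<And>s. s \<in> {0..t} \<Longrightarrow> norm (g' s - L) \<le> B"
  shows "norm (g t - g 0 - t *\<^sub>R L) \<le> B * t"
proof -
  have "norm ((g t - t *\<^sub>R L) - (g 0 - 0 *\<^sub>R L)) \<le> B * norm (t - 0)"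
  proof (rule differentiable_bound[where f' = "\<lambda>s h. h *\<^sub>R (g' s - L)"])
    show "((\<lambda>s. g s - s *\<^sub>R L) has_derivative (\<lambda>h. h *\<^sub>R (g' s - L))) (at s within {0..t})"
      if "s \<in> {0..t}" for s
      using deriv[OF that] unfolding has_vector_derivative_def
      by (auto intro!: derivative_eq_intros simp: algebra_simps)
    show "onorm (\<lambda>h. h *\<^sub>R (g' s - L)) \<le> B" if "s \<in> {0..t}" for s
      using bound[OF that] onorm_scaleR_left[OF bounded_linear_ident, of "g' s - L"] by (simp add: onorm_id)
  qed (use t in auto)
  then show ?thesis using t by (simp add: algebra_simps)
qed

lemma second_difference_bound:
  fixes f :: "real^'n::finite \<Rightarrow> 'v::real_normed_vector" and a b :: 'n
  defines "A \<equiv> axis a 1" and "B \<equiv> axis b 1"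
  assumes t: "0 < t"
    and diff: "\<And>x y. x \<in> {0..t} \<Longrightarrow> y \<in> {0..t} \<Longrightarrow>
      f differentiable (at (p + x *\<^sub>R A + y *\<^sub>R B)) \<and> pd b f differentiable (at (p + x *\<^sub>R A + y *\<^sub>R B))"
    and close: "\<And>x y. x \<in> {0..t} \<Longrightarrow> y \<in> {0..t} \<Longrightarrow> norm (pd a (pd b f) (p + x *\<^sub>R A + y *\<^sub>R B) - L) \<le> E"
  shows "norm (f (p + t *\<^sub>R A + t *\<^sub>R B) - f (p + t *\<^sub>R A) - f (p + t *\<^sub>R B) + f p - (t * t) *\<^sub>R L) \<le> E * t * t"
proof -
  have inner: "norm (pd b f (p + t *\<^sub>R A + s *\<^sub>R B) - pd b f (p + s *\<^sub>R B) - t *\<^sub>R L) \<le> E * t"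
    if s: "s \<in> {0..t}" for s
  proof -
    have "norm (pd b f ((p + s *\<^sub>R B) + t *\<^sub>R A) - pd b f ((p + s *\<^sub>R B) + 0 *\<^sub>R A) - t *\<^sub>R L) \<le> E * t"
    proof (rule increment_bound[where g' = "\<lambda>x. pd a (pd b f) (p + x *\<^sub>R A + s *\<^sub>R B)"])
      fix x assume x: "x \<in> {0..t}"
      then have "pd b f differentiable (at ((p + s *\<^sub>R B) + x *\<^sub>R A))"
        using diff[OF x s] by (simp add: algebra_simps)
      from has_vector_derivative_along_line[OF this]
      show "((\<lambda>x. pd b f ((p + s *\<^sub>R B) + x *\<^sub>R A)) has_vector_derivative pd a (pd b f) (p + x *\<^sub>R A + s *\<^sub>R B))
              (at x within {0..t})"
        by (simp add: pd_def A_def algebra_simps)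
      show "norm (pd a (pd b f) (p + x *\<^sub>R A + s *\<^sub>R B) - L) \<le> E" using close[OF x s] .
    qed (use t in auto)
    then show ?thesis by (simp add: algebra_simps)
  qed
  have "norm ((f ((p + t *\<^sub>R A) + t *\<^sub>R B) - f (p + t *\<^sub>R B))
          - (f ((p + t *\<^sub>R A) + 0 *\<^sub>R B) - f (p + 0 *\<^sub>R B)) - t *\<^sub>R (t *\<^sub>R L)) \<le> (E * t) * t"
  proof (rule increment_bound[where g' = "\<lambda>s. pd b f (p + t *\<^sub>R A + s *\<^sub>R B) - pd b f (p + s *\<^sub>R B)"])
    fix s assume s: "s \<in> {0..t}"
    have "f differentiable (at ((p + t *\<^sub>R A) + s *\<^sub>R B))" "f differentiable (at (p + s *\<^sub>R B))"
      using diff[of t s] diff[of 0 s] s t by auto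
    from has_vector_derivative_diff[OF has_vector_derivative_along_line[OF this(1)]
           has_vector_derivative_along_line[OF this(2)]]
    show "((\<lambda>s. f ((p + t *\<^sub>R A) + s *\<^sub>R B) - f (p + s *\<^sub>R B)) has_vector_derivative
            pd b f (p + t *\<^sub>R A + s *\<^sub>R B) - pd b f (p + s *\<^sub>R B)) (at s within {0..t})"
      by (simp add: pd_def B_def)
    show "norm (pd b f (p + t *\<^sub>R A + s *\<^sub>R B) - pd b f (p + s *\<^sub>R B) - t *\<^sub>R L) \<le> E * t"
      by (rule inner[OF s])
  qed (use t in auto)
  then show ?thesis by (simp add: algebra_simps)
qed

lemma second_difference_quotient:
  fixes f :: "real^'n::finite \<Rightarrow> 'v::real_normed_vector"
  assumes U: "open U" "p \<in> U" and df: "f differentiable_on U" and dbf: "pd b f differentiable_on U"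
    and cont: "continuous (at p) (pd a (pd b f))"
  shows "((\<lambda>t. (f (p + t *\<^sub>R axis a 1 + t *\<^sub>R axis b 1) - f (p + t *\<^sub>R axis a 1)
                 - f (p + t *\<^sub>R axis b 1) + f p) /\<^sub>R (t * t))
           \<longlongrightarrow> pd a (pd b f) p) (at_right 0)"
proof -
  define A where "A = (axis a 1 :: real^'n)"
  define B where "B = (axis b 1 :: real^'n)"
  define L where "L = pd a (pd b f) p"
  have "\<exists>d>0. \<forall>t>0. t < d \<longrightarrow> norm ((f (p + t *\<^sub>R A + t *\<^sub>R B) - f (p + t *\<^sub>R A)
              - f (p + t *\<^sub>R B) + f p) /\<^sub>R (t * t) - L) < e" if e: "e > 0" for e
  proof -
    obtain r where r: "r > 0" "ball p r \<subseteq> U" using U open_contains_ball by blast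
    obtain d0 where d0: "d0 > 0" "\<And>y. dist y p < d0 \<Longrightarrow> dist (pd a (pd b f) y) L < e / 2"
      using cont e unfolding continuous_at_eps_delta L_def by (meson half_gt_zero)
    define d where "d = min r d0 / 2"
    have near: "p + x *\<^sub>R A + y *\<^sub>R B \<in> U \<and> norm (pd a (pd b f) (p + x *\<^sub>R A + y *\<^sub>R B) - L) \<le> e / 2"
      if "x \<in> {0..t}" "y \<in> {0..t}" "t < d" for x y t
    proof -
      have "norm (x *\<^sub>R A + y *\<^sub>R B) \<le> x + y"
        using norm_triangle_ineq[of "x *\<^sub>R A" "y *\<^sub>R B"] that by (simp add: A_def B_def)
      then have "dist (p + x *\<^sub>R A + y *\<^sub>R B) p < min r d0"
        using that by (simp add: d_def dist_norm algebra_simps)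
      then show ?thesis
        using r d0(2)[of "p + x *\<^sub>R A + y *\<^sub>R B"] by (auto simp: dist_commute dist_norm norm_minus_commute)
    qed
    show ?thesis
    proof (intro exI[of _ d] conjI allI impI)
      show "d > 0" using r d0 by (simp add: d_def)
      fix t assume t: "0 < t" "t < d"
      define X where "X = f (p + t *\<^sub>R A + t *\<^sub>R B) - f (p + t *\<^sub>R A) - f (p + t *\<^sub>R B) + f p"
      have "norm (X - (t * t) *\<^sub>R L) \<le> e / 2 * t * t"
        unfolding X_def A_def B_def
      proof (rule second_difference_bound[OF t(1)])
        fix x y assume xy: "x \<in> {0..t}" "y \<in> {0..t}"
        then have "p + x *\<^sub>R axis a 1 + y *\<^sub>R axis b 1 \<in> U" using near t unfolding A_def B_def by blast
        then show "f differentiable (at (p + x *\<^sub>R axis a 1 + y *\<^sub>R axis b 1)) \<and>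
            pd b f differentiable (at (p + x *\<^sub>R axis a 1 + y *\<^sub>R axis b 1))"
          using df dbf U(1) differentiable_on_eq_differentiable_at by blast
        show "norm (pd a (pd b f) (p + x *\<^sub>R axis a 1 + y *\<^sub>R axis b 1) - L) \<le> e / 2"
          using near[OF xy t(2)] unfolding A_def B_def by blast
      qed
      moreover have "0 < (t * t) * e" using e t by simp
      ultimately have "norm (X - (t * t) *\<^sub>R L) / (t * t) < e"
        using t by (simp add: divide_less_eq mult_ac)
      moreover have "X /\<^sub>R (t * t) - L = (X - (t * t) *\<^sub>R L) /\<^sub>R (t * t)"
        using t by (simp add: algebra_simps)
      ultimately show "norm (X /\<^sub>R (t * t) - L) < e"
        by (simp add: divide_inverse_commute)
    qed
  qed
  then show ?thesis
    unfolding tendsto_iff eventually_at_right_field dist_norm A_def B_def L_def by simp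
qed

text \<open>The second difference quotient is symmetric in \<open>a\<close> and \<open>b\<close>.\<close>
lemma pd_commute:
  fixes f :: "real^'n::finite \<Rightarrow> 'v::real_normed_vector"
  assumes U: "open U" "p \<in> U" and f: "smooth_on U f"
  shows "pd a (pd b f) p = pd b (pd a f) p"
proof (rule tendsto_unique[OF trivial_limit_at_right_real])
  have second: "continuous (at p) (pd c (pd d f))" for c d
    using smooth_on_imp_differentiable[OF smooth_on_pd[OF smooth_on_pd[OF f]] U]
    by (simp add: differentiable_imp_continuous_within)
  have first: "f differentiable_on U" "pd c f differentiable_on U" for c
    using f smooth_on_pd smooth_on_imp_differentiable_on by blast+
  show "((\<lambda>t. (f (p + t *\<^sub>R axis a 1 + t *\<^sub>R axis b 1) - f (p + t *\<^sub>R axis a 1)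
                 - f (p + t *\<^sub>R axis b 1) + f p) /\<^sub>R (t * t)) \<longlongrightarrow> pd a (pd b f) p) (at_right 0)"
    by (rule second_difference_quotient[OF U first second])
  show "((\<lambda>t. (f (p + t *\<^sub>R axis a 1 + t *\<^sub>R axis b 1) - f (p + t *\<^sub>R axis a 1)
                 - f (p + t *\<^sub>R axis b 1) + f p) /\<^sub>R (t * t)) \<longlongrightarrow> pd b (pd a f) p) (at_right 0)"
    using second_difference_quotient[OF U first second, of b a] by (simp add: algebra_simps)
qed

section \<open>Structure equations in a chart\<close>

lemma coefficients_unique:
  fixes X :: "'n::finite \<Rightarrow> 'v::real_vector"
  assumes indep: "\<forall>a c. a *\<^sub>R x0 + (\<Sum>k\<in>UNIV. c k *\<^sub>R X k) = 0 \<longrightarrow> a = 0 \<and> (\<forall>k. c k = 0)"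
    and eq: "a1 *\<^sub>R x0 + (\<Sum>k\<in>UNIV. c1 k *\<^sub>R X k) = a2 *\<^sub>R x0 + (\<Sum>k\<in>UNIV. c2 k *\<^sub>R X k)"
  shows "a1 = a2 \<and> (\<forall>k. c1 k = c2 k)"
proof -
  have "(a1 - a2) *\<^sub>R x0 + (\<Sum>k\<in>UNIV. (c1 k - c2 k) *\<^sub>R X k) = 0"
    using eq by (simp add: algebra_simps sum_subtractf)
  then show ?thesis using indep by fastforce
qed

lemma sum_scaleR_regroup:
  fixes X :: "'n::finite \<Rightarrow> 'v::real_vector"
  shows "(\<Sum>k\<in>UNIV. g k *\<^sub>R ((\<Sum>m\<in>UNIV. G m k *\<^sub>R X m) + H k *\<^sub>R x0))
      = (\<Sum>k\<in>UNIV. (\<Sum>m\<in>UNIV. g m * G k m) *\<^sub>R X k) + (\<Sum>m\<in>UNIV. g m * H m) *\<^sub>R x0"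
proof -
  have "(\<Sum>k\<in>UNIV. g k *\<^sub>R ((\<Sum>m\<in>UNIV. G m k *\<^sub>R X m) + H k *\<^sub>R x0))
     = (\<Sum>k\<in>UNIV. \<Sum>m\<in>UNIV. (g k * G m k) *\<^sub>R X m) + (\<Sum>k\<in>UNIV. (g k * H k) *\<^sub>R x0)"
    by (simp add: scaleR_add_right sum.distrib scaleR_sum_right)
  also have "(\<Sum>k\<in>UNIV. \<Sum>m\<in>UNIV. (g k * G m k) *\<^sub>R X m) = (\<Sum>m\<in>UNIV. \<Sum>k\<in>UNIV. (g k * G m k) *\<^sub>R X m)"
    by (rule sum.swap)
  finally show ?thesis by (simp add: scaleR_sum_left)
qed

lemma sum_scaleR_delta:
  fixes X :: "'n::finite \<Rightarrow> 'v::real_vector"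
  shows "(\<Sum>k\<in>UNIV. (c * (if k = l then 1 else 0)) *\<^sub>R X k) = c *\<^sub>R X l"
proof -
  have "(c * (if k = l then 1 else 0)) *\<^sub>R X k = (if k = l then c *\<^sub>R X k else 0)" for k
    by simp
  then show ?thesis by simp
qed

locale centroaffine_chart =
  fixes U :: "(real^'n::finite) set" and x :: "real^'n \<Rightarrow> real^'m::finite" and eps :: real
    and G hG :: "'n \<Rightarrow> 'n \<Rightarrow> 'n \<Rightarrow> real^'n \<Rightarrow> real" and h :: "'n \<Rightarrow> 'n \<Rightarrow> real^'n \<Rightarrow> real"
  assumes hypersurface: "centroaffine_hypersurface U x eps G h"
    and smooth_h: "\<And>i j. smooth_on U (h i j)"
    and smooth_G: "\<And>k i j. smooth_on U (G k i j)"
    and smooth_hG: "\<And>k i j. smooth_on U (hG k i j)"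
    and levi_civita: "levi_civita U h hG"
begin

lemma open_U: "open U" and smooth_x: "smooth_on U x" and eps_sign: "eps = 1 \<or> eps = -1"
  and frame_independent: "q \<in> U \<Longrightarrow>
    \<forall>a c. a *\<^sub>R x q + (\<Sum>k\<in>UNIV. c k *\<^sub>R pd k x q) = 0 \<longrightarrow> a = 0 \<and> (\<forall>k. c k = 0)"
  and gauss_formula: "q \<in> U \<Longrightarrow>
    pd i (pd j x) q = (\<Sum>k\<in>UNIV. G k i j q *\<^sub>R pd k x q) + (h i j q * - eps) *\<^sub>R x q"
  using hypersurface unfolding centroaffine_hypersurface_def by auto

lemma levi_civita_symmetric: "q \<in> U \<Longrightarrow> hG k i j q = hG k j i q"
  and levi_civita_metric: "q \<in> U \<Longrightarrow>
    pd k (h i j) q = (\<Sum>l\<in>UNIV. hG l k i q * h l j q + hG l k j q * h i l q)"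
  using levi_civita unfolding levi_civita_def by auto

lemma differentiable_h: "q \<in> U \<Longrightarrow> h i j differentiable (at q)"
  and differentiable_G: "q \<in> U \<Longrightarrow> G k i j differentiable (at q)"
  and differentiable_hG: "q \<in> U \<Longrightarrow> hG k i j differentiable (at q)"
  using smooth_h smooth_G smooth_hG open_U smooth_on_imp_differentiable by blast+

lemma metric_symmetric: "q \<in> U \<Longrightarrow> h i j q = h j i q"
  and connection_symmetric: "q \<in> U \<Longrightarrow> G k i j q = G k j i q"
proof -
  assume q: "q \<in> U"
  have "pd i (pd j x) q = pd j (pd i x) q" by (rule pd_commute[OF open_U q smooth_x])
  then have "(- eps * h i j q) *\<^sub>R x q + (\<Sum>k\<in>UNIV. G k i j q *\<^sub>R pd k x q)
      = (- eps * h j i q) *\<^sub>R x q + (\<Sum>k\<in>UNIV. G k j i q *\<^sub>R pd k x q)"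
    unfolding gauss_formula[OF q] by (simp add: algebra_simps)
  from coefficients_unique[OF frame_independent[OF q] this] eps_sign
  show "h i j q = h j i q" "G k i j q = G k j i q" by auto
qed

lemma third_derivative:
  assumes q: "q \<in> U"
  shows "pd l (pd i (pd j x)) q =
     (- eps * (pd l (h i j) q + (\<Sum>m\<in>UNIV. G m i j q * h l m q))) *\<^sub>R x q
     + (\<Sum>k\<in>UNIV. (pd l (G k i j) q + (\<Sum>m\<in>UNIV. G m i j q * G k l m q)
          - eps * h i j q * (if k = l then 1 else 0)) *\<^sub>R pd k x q)"
proof -
  have dx: "x differentiable (at q)" and dxk: "\<And>k. pd k x differentiable (at q)"
    using smooth_on_imp_differentiable[OF _ open_U q] smooth_x smooth_on_pd by blast+
  note dG = differentiable_G[OF q] and dh = differentiable_h[OF q]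
  have "pd l (pd i (pd j x)) q
      = pd l (\<lambda>y. (\<Sum>k\<in>UNIV. G k i j y *\<^sub>R pd k x y) + (h i j y * - eps) *\<^sub>R x y) q"
    by (rule pd_cong[OF open_U q]) (simp add: gauss_formula)
  also have "\<dots> = (\<Sum>k\<in>UNIV. pd l (G k i j) q *\<^sub>R pd k x q + G k i j q *\<^sub>R pd l (pd k x) q)
       + ((pd l (h i j) q * - eps) *\<^sub>R x q + (h i j q * - eps) *\<^sub>R pd l x q)"
    apply (subst pd_add)
      apply (rule differentiable_sum, simp, blast intro: differentiable_scaleR dG dxk)
     apply (intro differentiable_scaleR differentiable_mult dh dx differentiable_const)
    apply (subst pd_sum, simp, intro differentiable_scaleR dG dxk)
    apply (subst pd_scaleR[OF _ dx], intro differentiable_mult dh differentiable_const)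
    apply (subst pd_mult_const[OF dh], subst pd_scaleR[OF dG dxk], simp)
    done
  also have "\<dots> = (\<Sum>k\<in>UNIV. pd l (G k i j) q *\<^sub>R pd k x q)
       + (\<Sum>k\<in>UNIV. G k i j q *\<^sub>R ((\<Sum>m\<in>UNIV. G m l k q *\<^sub>R pd m x q) + (h l k q * - eps) *\<^sub>R x q))
       + ((pd l (h i j) q * - eps) *\<^sub>R x q + (\<Sum>k\<in>UNIV. (h i j q * - eps * (if k = l then 1 else 0)) *\<^sub>R pd k x q))"
    unfolding sum_scaleR_delta by (simp add: gauss_formula[OF q] sum.distrib)
  also have "\<dots> = (- eps * (pd l (h i j) q + (\<Sum>m\<in>UNIV. G m i j q * h l m q))) *\<^sub>R x q
     + (\<Sum>k\<in>UNIV. (pd l (G k i j) q + (\<Sum>m\<in>UNIV. G m i j q * G k l m q)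
          - eps * h i j q * (if k = l then 1 else 0)) *\<^sub>R pd k x q)"
    unfolding sum_scaleR_regroup
    by (simp add: algebra_simps sum.distrib sum_distrib_left scaleR_add_left sum_subtractf sum_negf)
  finally show ?thesis .
qed

lemma codazzi_equation:
  "q \<in> U \<Longrightarrow> pd l (h i j) q + (\<Sum>m\<in>UNIV. G m i j q * h l m q)
     = pd i (h l j) q + (\<Sum>m\<in>UNIV. G m l j q * h i m q)"
  and gauss_equation:
  "q \<in> U \<Longrightarrow> pd l (G k i j) q + (\<Sum>m\<in>UNIV. G m i j q * G k l m q) - eps * h i j q * (if k = l then 1 else 0)
     = pd i (G k l j) q + (\<Sum>m\<in>UNIV. G m l j q * G k i m q) - eps * h l j q * (if k = i then 1 else 0)"
proof -
  assume q: "q \<in> U"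
  have "pd l (pd i (pd j x)) q = pd i (pd l (pd j x)) q"
    by (rule pd_commute[OF open_U q smooth_on_pd[OF smooth_x]])
  from coefficients_unique[OF frame_independent[OF q], OF this[unfolded third_derivative[OF q]]]
  show "pd l (h i j) q + (\<Sum>m\<in>UNIV. G m i j q * h l m q) = pd i (h l j) q + (\<Sum>m\<in>UNIV. G m l j q * h i m q)"
    and "pd l (G k i j) q + (\<Sum>m\<in>UNIV. G m i j q * G k l m q) - eps * h i j q * (if k = l then 1 else 0)
       = pd i (G k l j) q + (\<Sum>m\<in>UNIV. G m l j q * G k i m q) - eps * h l j q * (if k = i then 1 else 0)"
    using eps_sign by auto
qed

lemma diff_tensor_symmetric: "q \<in> U \<Longrightarrow> diff_tensor G hG k i j q = diff_tensor G hG k j i q"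
  by (simp add: diff_tensor_def connection_symmetric levi_civita_symmetric)

lemma smooth_diff_tensor: "smooth_on U (diff_tensor G hG k i j)"
proof -
  have "diff_tensor G hG k i j = (\<lambda>q. G k i j q - hG k i j q)"
    by (simp add: diff_tensor_def fun_eq_iff)
  then show ?thesis using smooth_on_diff[OF open_U smooth_G smooth_hG] by simp
qed

text \<open>Total symmetry of \<open>h(K\<^sub>X Y, Z)\<close>: the Codazzi equation for \<open>h\<close> minus the metric property
  of \<open>\<^bold>\<nabla>\<close>.\<close>
lemma cubic_form_symmetric:
  assumes q: "q \<in> U"
  shows "(\<Sum>m\<in>UNIV. diff_tensor G hG m i j q * h l m q) = (\<Sum>m\<in>UNIV. diff_tensor G hG m l j q * h i m q)"
proof -
  have "pd l (h i j) q + (\<Sum>m\<in>UNIV. hG m i j q * h l m q)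
      = (\<Sum>m\<in>UNIV. hG m l i q * h m j q + hG m l j q * h i m q + hG m i j q * h l m q)"
    by (simp add: levi_civita_metric[OF q] sum.distrib)
  also have "\<dots> = (\<Sum>m\<in>UNIV. hG m i l q * h m j q + hG m i j q * h l m q + hG m l j q * h i m q)"
    by (rule sum.cong) (auto simp: levi_civita_symmetric[OF q, of _ l i])
  also have "\<dots> = pd i (h l j) q + (\<Sum>m\<in>UNIV. hG m l j q * h i m q)"
    by (simp add: levi_civita_metric[OF q] sum.distrib)
  finally show ?thesis
    using codazzi_equation[OF q, of l i j] by (simp add: diff_tensor_def algebra_simps sum_subtractf)
qed

lemma pd_cov_deriv_K:
  assumes q: "q \<in> U"
  defines "Kt \<equiv> diff_tensor G hG"
  shows "pd a (cov_deriv_K hG Kt b k i j) q = pd a (pd b (Kt k i j)) q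
       + (\<Sum>m\<in>UNIV. pd a (hG k b m) q * Kt m i j q + hG k b m q * pd a (Kt m i j) q)
       - (\<Sum>m\<in>UNIV. pd a (hG m b i) q * Kt k m j q + hG m b i q * pd a (Kt k m j) q)
       - (\<Sum>m\<in>UNIV. pd a (hG m b j) q * Kt k i m q + hG m b j q * pd a (Kt k i m) q)"
proof -
  have dKt: "Kt k i j differentiable (at q)" "pd b (Kt k i j) differentiable (at q)" for b k i j
    using smooth_on_imp_differentiable[OF _ open_U q] smooth_diff_tensor smooth_on_pd
    unfolding Kt_def by blast+
  note dhG = differentiable_hG[OF q]
  have dsum: "(\<lambda>q. \<Sum>m\<in>UNIV. f m q * g m q) differentiable (at q)"
    if "\<And>m. f m differentiable (at q)" "\<And>m. g m differentiable (at q)" for f g :: "'n \<Rightarrow> real^'n \<Rightarrow> real"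
    using that by (intro differentiable_sum differentiable_mult) auto
  have pd_sum_mult: "pd a (\<lambda>q. \<Sum>m\<in>UNIV. f m q * g m q) q = (\<Sum>m\<in>UNIV. pd a (f m) q * g m q + f m q * pd a (g m) q)"
    if "\<And>m. f m differentiable (at q)" "\<And>m. g m differentiable (at q)" for f g :: "'n \<Rightarrow> real^'n \<Rightarrow> real"
    using that by (subst pd_sum) (auto intro: differentiable_mult simp: pd_mult)
  show ?thesis
    unfolding cov_deriv_K_def
    apply (subst pd_diff, (intro differentiable_diff differentiable_add dKt dsum dhG)+)+
    apply (subst pd_add, (intro dKt dsum dhG)+)
    apply (simp add: pd_sum_mult dhG dKt)
    done
qed

end

section \<open>The Ricci identity for the difference tensor\<close>

lemma double_sum_swap:
  assumes "\<And>m l. f m l = g l m"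
  shows "(\<Sum>m\<in>UNIV. \<Sum>l\<in>UNIV. f m l) = (\<Sum>m\<in>UNIV. \<Sum>l\<in>UNIV. (g m l :: 'a::comm_monoid_add))"
  using assms by (subst sum.swap) simp

text \<open>Coordinate form of \<open>\<^bold>\<nabla>\<^sub>a\<^bold>\<nabla>\<^sub>bK - \<^bold>\<nabla>\<^sub>b\<^bold>\<nabla>\<^sub>aK = R(a,b)\<cdot>K\<close>, in which the first derivatives
  \<open>dK\<close> are eliminated through \<open>\<^bold>\<nabla>K = Q\<close>.\<close>
lemma ricci_commutator_coords:
  fixes Ga K :: "'n::finite \<Rightarrow> 'n \<Rightarrow> 'n \<Rightarrow> real" and dGa Q dK :: "'n \<Rightarrow> 'n \<Rightarrow> 'n \<Rightarrow> 'n \<Rightarrow> real"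
    and ddK :: "'n \<Rightarrow> 'n \<Rightarrow> real"
  assumes dK: "\<And>a x y z. dK a x y z = Q a x y z - (\<Sum>l\<in>UNIV. Ga x a l * K l y z)
                 + (\<Sum>l\<in>UNIV. Ga l a y * K x l z) + (\<Sum>l\<in>UNIV. Ga l a z * K x y l)"
    and ddK: "ddK a b = ddK b a"
  shows "(ddK a b + (\<Sum>m\<in>UNIV. dGa a k b m * K m i j + Ga k b m * dK a m i j)
              - (\<Sum>m\<in>UNIV. dGa a m b i * K k m j + Ga m b i * dK a k m j)
              - (\<Sum>m\<in>UNIV. dGa a m b j * K k i m + Ga m b j * dK a k i m))
       - (ddK b a + (\<Sum>m\<in>UNIV. dGa b k a m * K m i j + Ga k a m * dK b m i j)
              - (\<Sum>m\<in>UNIV. dGa b m a i * K k m j + Ga m a i * dK b k m j)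
              - (\<Sum>m\<in>UNIV. dGa b m a j * K k i m + Ga m a j * dK b k i m))
     = (\<Sum>m\<in>UNIV. (dGa a k b m - dGa b k a m + (\<Sum>l\<in>UNIV. Ga k a l * Ga l b m - Ga k b l * Ga l a m)) * K m i j)
       - (\<Sum>m\<in>UNIV. (dGa a m b i - dGa b m a i + (\<Sum>l\<in>UNIV. Ga m a l * Ga l b i - Ga m b l * Ga l a i)) * K k m j)
       - (\<Sum>m\<in>UNIV. (dGa a m b j - dGa b m a j + (\<Sum>l\<in>UNIV. Ga m a l * Ga l b j - Ga m b l * Ga l a j)) * K k i m)
       + ((\<Sum>m\<in>UNIV. Ga k b m * Q a m i j - Ga m b i * Q a k m j - Ga m b j * Q a k i m)
         - (\<Sum>m\<in>UNIV. Ga k a m * Q b m i j - Ga m a i * Q b k m j - Ga m a j * Q b k i m))"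
proof -
  note sw = double_sum_swap[OF refl]
  note distrib = sum_distrib_left sum_distrib_right sum.distrib sum_subtractf distrib_left distrib_right
     right_diff_distrib left_diff_distrib
  have swaps:
    "(\<Sum>m\<in>UNIV. \<Sum>l\<in>UNIV. Ga k a l * Ga l b m * K m i j) = (\<Sum>m\<in>UNIV. \<Sum>l\<in>UNIV. Ga k a m * (Ga m b l * K l i j))"
    "(\<Sum>m\<in>UNIV. \<Sum>l\<in>UNIV. Ga k b l * Ga l a m * K m i j) = (\<Sum>m\<in>UNIV. \<Sum>l\<in>UNIV. Ga k b m * (Ga m a l * K l i j))"
    "(\<Sum>m\<in>UNIV. \<Sum>l\<in>UNIV. Ga m a i * (Ga k b l * K l m j)) = (\<Sum>m\<in>UNIV. \<Sum>l\<in>UNIV. Ga k b m * (Ga l a i * K m l j))"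
    "(\<Sum>m\<in>UNIV. \<Sum>l\<in>UNIV. Ga m b i * (Ga k a l * K l m j)) = (\<Sum>m\<in>UNIV. \<Sum>l\<in>UNIV. Ga k a m * (Ga l b i * K m l j))"
    "(\<Sum>m\<in>UNIV. \<Sum>l\<in>UNIV. Ga m a j * (Ga k b l * K l i m)) = (\<Sum>m\<in>UNIV. \<Sum>l\<in>UNIV. Ga k b m * (Ga l a j * K m i l))"
    "(\<Sum>m\<in>UNIV. \<Sum>l\<in>UNIV. Ga m b j * (Ga k a l * K l i m)) = (\<Sum>m\<in>UNIV. \<Sum>l\<in>UNIV. Ga k a m * (Ga l b j * K m i l))"
    "(\<Sum>m\<in>UNIV. \<Sum>l\<in>UNIV. Ga m a l * Ga l b i * K k m j) = (\<Sum>m\<in>UNIV. \<Sum>l\<in>UNIV. Ga m b i * (Ga l a m * K k l j))"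
    "(\<Sum>m\<in>UNIV. \<Sum>l\<in>UNIV. Ga m b l * Ga l a i * K k m j) = (\<Sum>m\<in>UNIV. \<Sum>l\<in>UNIV. Ga m a i * (Ga l b m * K k l j))"
    "(\<Sum>m\<in>UNIV. \<Sum>l\<in>UNIV. Ga m a j * (Ga l b i * K k l m)) = (\<Sum>m\<in>UNIV. \<Sum>l\<in>UNIV. Ga m b i * (Ga l a j * K k m l))"
    "(\<Sum>m\<in>UNIV. \<Sum>l\<in>UNIV. Ga m b j * (Ga l a i * K k l m)) = (\<Sum>m\<in>UNIV. \<Sum>l\<in>UNIV. Ga m a i * (Ga l b j * K k m l))"
    "(\<Sum>m\<in>UNIV. \<Sum>l\<in>UNIV. Ga m a l * Ga l b j * K k i m) = (\<Sum>m\<in>UNIV. \<Sum>l\<in>UNIV. Ga m b j * (Ga l a m * K k i l))"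
    "(\<Sum>m\<in>UNIV. \<Sum>l\<in>UNIV. Ga m b l * Ga l a j * K k i m) = (\<Sum>m\<in>UNIV. \<Sum>l\<in>UNIV. Ga m a j * (Ga l b m * K k i l))"
    by (rule double_sum_swap, simp add: mult_ac)+
  show ?thesis
    unfolding dK
    apply (simp only: distrib)
    apply (simp only: swaps ddK mult.assoc)
    apply (simp add: algebra_simps)
    apply (simp only: sw[of "\<lambda>m n. Ga n a m * (Ga k b n * K m i j)"] sw[of "\<lambda>m n. Ga m a n * (Ga n b i * K k m j)"]
       sw[of "\<lambda>m n. Ga m a n * (Ga n b j * K k i m)"] sw[of "\<lambda>m n. Ga m a i * (Ga n b m * K k n j)"]
       sw[of "\<lambda>m n. Ga m a j * (Ga n b m * K k i n)"] sw[of "\<lambda>m n. Ga m b n * (Ga k a m * K n i j)"])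
    apply (simp add: algebra_simps)
    done
qed

text \<open>\<open>hsym hc l k i j\<close> is the \<open>k\<close>-th component of
  \<open>h(\<partial>\<^sub>i,\<partial>\<^sub>j)\<partial>\<^sub>l + h(\<partial>\<^sub>i,\<partial>\<^sub>l)\<partial>\<^sub>j + h(\<partial>\<^sub>j,\<partial>\<^sub>l)\<partial>\<^sub>i\<close>.\<close>
definition hsym :: "('n::finite \<Rightarrow> 'n \<Rightarrow> real) \<Rightarrow> 'n \<Rightarrow> 'n \<Rightarrow> 'n \<Rightarrow> 'n \<Rightarrow> real" where
  "hsym hc l k i j = hc i j * (if k = l then 1 else 0) + hc i l * (if k = j then 1 else 0)
     + hc j l * (if k = i then 1 else 0)"

lemma hsym_commutator_coords:
  fixes Ga :: "'n::finite \<Rightarrow> 'n \<Rightarrow> 'n \<Rightarrow> real" and hc :: "'n \<Rightarrow> 'n \<Rightarrow> real" and dh :: "'n \<Rightarrow> 'n \<Rightarrow> 'n \<Rightarrow> real"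
  assumes Ga_sym: "\<And>k i j. Ga k i j = Ga k j i" and hc_sym: "\<And>i j. hc i j = hc j i"
    and metric: "\<And>k i j. dh k i j = (\<Sum>l\<in>UNIV. Ga l k i * hc l j + Ga l k j * hc i l)"
  shows "hsym (dh a) b k i j - hsym (dh b) a k i j
     = (\<Sum>m\<in>UNIV. Ga k b m * hsym hc a m i j - Ga m b i * hsym hc a k m j - Ga m b j * hsym hc a k i m)
         - (\<Sum>m\<in>UNIV. Ga k a m * hsym hc b m i j - Ga m a i * hsym hc b k m j - Ga m a j * hsym hc b k i m)"
proof -
  have expand: "(\<Sum>m\<in>UNIV. Ga k b m * hsym hc a m i j - Ga m b i * hsym hc a k m j - Ga m b j * hsym hc a k i m)
     = Ga k b a * hc i j - (if k = a then 1 else 0) * ((\<Sum>m\<in>UNIV. Ga m b i * hc m j) + (\<Sum>m\<in>UNIV. Ga m b j * hc i m))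
       - (if k = j then 1 else 0) * (\<Sum>m\<in>UNIV. Ga m b i * hc m a)
       - (if k = i then 1 else 0) * (\<Sum>m\<in>UNIV. Ga m b j * hc m a)" for a b
  proof -
    have "(\<Sum>m\<in>UNIV. Ga k b m * hsym hc a m i j) = Ga k b a * hc i j + Ga k b j * hc i a + Ga k b i * hc j a"
      by (simp add: hsym_def algebra_simps sum.distrib if_distrib[where f="\<lambda>x. _ * x"] cong: if_cong)
    moreover have "(\<Sum>m\<in>UNIV. Ga m b i * hsym hc a k m j) = (if k = a then 1 else 0) * (\<Sum>m\<in>UNIV. Ga m b i * hc m j)
        + (if k = j then 1 else 0) * (\<Sum>m\<in>UNIV. Ga m b i * hc m a) + hc j a * Ga k b i"
      by (simp add: hsym_def algebra_simps sum.distrib sum_distrib_left if_distrib[where f="\<lambda>x. _ * x"] cong: if_cong)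
    moreover have "(\<Sum>m\<in>UNIV. Ga m b j * hsym hc a k i m) = (if k = a then 1 else 0) * (\<Sum>m\<in>UNIV. Ga m b j * hc i m)
        + hc i a * Ga k b j + (if k = i then 1 else 0) * (\<Sum>m\<in>UNIV. Ga m b j * hc m a)"
      by (simp add: hsym_def algebra_simps sum.distrib sum_distrib_left if_distrib[where f="\<lambda>x. _ * x"] cong: if_cong)
    ultimately show ?thesis
      by (simp only: sum_subtractf) (simp add: hc_sym algebra_simps split del: if_split)
  qed
  have "Ga l b a = Ga l a b" for l using Ga_sym by simp
  then show ?thesis unfolding expand
    by (simp add: hsym_def metric sum.distrib algebra_simps split del: if_split)
qed

text \<open>\<open>gauss_curvature eps hc Kc l k i j\<close> is the \<open>k\<close>-th component of \<open>R(\<partial>\<^sub>l,\<partial>\<^sub>i)\<partial>\<^sub>j\<close>.\<close>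
definition gauss_curvature ::
  "real \<Rightarrow> ('n::finite \<Rightarrow> 'n \<Rightarrow> real) \<Rightarrow> ('n \<Rightarrow> 'n \<Rightarrow> 'n \<Rightarrow> real) \<Rightarrow> 'n \<Rightarrow> 'n \<Rightarrow> 'n \<Rightarrow> 'n \<Rightarrow> real" where
  "gauss_curvature eps hc Kc l k i j = eps * (hc i j * (if k = l then 1 else 0) - hc l j * (if k = i then 1 else 0))
     - (\<Sum>m\<in>UNIV. Kc k l m * Kc m i j - Kc k i m * Kc m l j)"

locale isotropic_chart = centroaffine_chart +
  fixes mu :: "real^'n \<Rightarrow> real"
  assumes smooth_mu: "smooth_on U mu"
    and isotropic: "\<And>q l k i j. q \<in> U \<Longrightarrow>
      cov_deriv_K hG (diff_tensor G hG) l k i j q = mu q * hsym (\<lambda>i j. h i j q) l k i j"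
begin

lemma pd_cov_deriv_K_isotropic:
  assumes q: "q \<in> U"
  shows "pd a (cov_deriv_K hG (diff_tensor G hG) b k i j) q
     = pd a mu q * hsym (\<lambda>i j. h i j q) b k i j + mu q * hsym (\<lambda>i j. pd a (h i j) q) b k i j"
proof -
  note dh = differentiable_h[OF q]
  have "pd a (cov_deriv_K hG (diff_tensor G hG) b k i j) q = pd a (\<lambda>q. mu q * hsym (\<lambda>i j. h i j q) b k i j) q"
    by (rule pd_cong[OF open_U q]) (simp add: isotropic)
  also have "\<dots> = pd a mu q * hsym (\<lambda>i j. h i j q) b k i j + mu q * hsym (\<lambda>i j. pd a (h i j) q) b k i j"
    unfolding hsym_def
    apply (subst pd_mult[OF smooth_on_imp_differentiable[OF smooth_mu open_U q]])
     apply (intro differentiable_add differentiable_mult dh differentiable_const)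
    apply (subst pd_add, (intro differentiable_add differentiable_mult dh differentiable_const)+)+
    apply (simp add: pd_mult_const dh)
    done
  finally show ?thesis .
qed

lemma pd_diff_tensor_isotropic:
  assumes q: "q \<in> U"
  defines "K \<equiv> \<lambda>k i j. diff_tensor G hG k i j q"
  shows "pd a (diff_tensor G hG k i j) q = mu q * hsym (\<lambda>i j. h i j q) a k i j
     - (\<Sum>l\<in>UNIV. hG k a l q * K l i j) + (\<Sum>l\<in>UNIV. hG l a i q * K k l j) + (\<Sum>l\<in>UNIV. hG l a j q * K k i l)"
  using isotropic[OF q, of a k i j] unfolding cov_deriv_K_def K_def by simp

lemma levi_civita_curvature:
  assumes q: "q \<in> U"
  shows "pd l (hG k i j) q - pd i (hG k l j) q + (\<Sum>m\<in>UNIV. hG k l m q * hG m i j q - hG k i m q * hG m l j q)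
     = gauss_curvature eps (\<lambda>i j. h i j q) (\<lambda>k i j. diff_tensor G hG k i j q) l k i j"
proof -
  define K where "K = (\<lambda>k i j. diff_tensor G hG k i j q)"
  have pd_G: "pd a (G k i j) q = pd a (hG k i j) q + pd a (diff_tensor G hG k i j) q" for a k i j
  proof -
    have "G k i j = (\<lambda>q. hG k i j q + diff_tensor G hG k i j q)" by (simp add: diff_tensor_def fun_eq_iff)
    then show ?thesis
      using pd_add[OF differentiable_hG[OF q] smooth_on_imp_differentiable[OF smooth_diff_tensor open_U q]]
      by metis
  qed
  have G: "G k i j q = hG k i j q + K k i j" for k i j by (simp add: K_def diff_tensor_def)
  define dK where "dK = (\<lambda>a k i j. pd a (diff_tensor G hG k i j) q)"
  have gauss: "pd l (hG k i j) q + dK l k i j + (\<Sum>m\<in>UNIV. (hG m i j q + K m i j) * (hG k l m q + K k l m))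
       - eps * h i j q * (if k = l then 1 else 0)
     = pd i (hG k l j) q + dK i k l j + (\<Sum>m\<in>UNIV. (hG m l j q + K m l j) * (hG k i m q + K k i m))
       - eps * h l j q * (if k = i then 1 else 0)"
    using gauss_equation[OF q, of l k i j] unfolding pd_G G dK_def .
  have "hsym (\<lambda>i j. h i j q) l k i j = hsym (\<lambda>i j. h i j q) i k l j"
    by (simp add: hsym_def metric_symmetric[OF q])
  then have codazzi_K: "dK l k i j + (\<Sum>m\<in>UNIV. hG k l m q * K m i j) - (\<Sum>m\<in>UNIV. hG m l i q * K k m j)
       - (\<Sum>m\<in>UNIV. hG m l j q * K k i m)
     = dK i k l j + (\<Sum>m\<in>UNIV. hG k i m q * K m l j) - (\<Sum>m\<in>UNIV. hG m i l q * K k m j)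
       - (\<Sum>m\<in>UNIV. hG m i j q * K k l m)"
    using isotropic[OF q, of l k i j] isotropic[OF q, of i k l j]
    unfolding cov_deriv_K_def dK_def K_def by simp
  have "(\<Sum>m\<in>UNIV. hG m l i q * K k m j) = (\<Sum>m\<in>UNIV. hG m i l q * K k m j)"
    by (simp add: levi_civita_symmetric[OF q])
  with gauss codazzi_K show ?thesis
    unfolding gauss_curvature_def K_def[symmetric]
    by (simp add: algebra_simps sum.distrib sum_subtractf)
qed

lemma ricci_identity_coords:
  assumes q: "q \<in> U"
  defines "hc \<equiv> \<lambda>i j. h i j q" and "K \<equiv> \<lambda>k i j. diff_tensor G hG k i j q"
  shows "pd a mu q * hsym hc b k i j - pd b mu q * hsym hc a k i j
     = (\<Sum>m\<in>UNIV. gauss_curvature eps hc K a k b m * K m i j)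
       - (\<Sum>m\<in>UNIV. gauss_curvature eps hc K a m b i * K k m j)
       - (\<Sum>m\<in>UNIV. gauss_curvature eps hc K a m b j * K k i m)"
proof -
  define Ga where "Ga = (\<lambda>k i j. hG k i j q)"
  define dGa where "dGa = (\<lambda>a k i j. pd a (hG k i j) q)"
  define dK where "dK = (\<lambda>a k i j. pd a (diff_tensor G hG k i j) q)"
  define Q where "Q = (\<lambda>a k i j. mu q * hsym hc a k i j)"
  have dK_eq: "dK a' k' i' j' = Q a' k' i' j' - (\<Sum>l\<in>UNIV. Ga k' a' l * K l i' j')
      + (\<Sum>l\<in>UNIV. Ga l a' i' * K k' l j') + (\<Sum>l\<in>UNIV. Ga l a' j' * K k' i' l)" for a' k' i' j'
    unfolding dK_def Q_def Ga_def K_def hc_def by (rule pd_diff_tensor_isotropic[OF q])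
  have "pd a (pd b (diff_tensor G hG k i j)) q = pd b (pd a (diff_tensor G hG k i j)) q"
    by (rule pd_commute[OF open_U q smooth_diff_tensor])
  note ricci = ricci_commutator_coords[of dK Q Ga K "\<lambda>a b. pd a (pd b (diff_tensor G hG k i j)) q" a b dGa k i j,
    OF dK_eq this]
  have hsym_terms: "hsym (\<lambda>i j. pd a (h i j) q) b k i j - hsym (\<lambda>i j. pd b (h i j) q) a k i j
     = (\<Sum>m\<in>UNIV. Ga k b m * hsym hc a m i j - Ga m b i * hsym hc a k m j - Ga m b j * hsym hc a k i m)
         - (\<Sum>m\<in>UNIV. Ga k a m * hsym hc b m i j - Ga m a i * hsym hc b k m j - Ga m a j * hsym hc b k i m)"
    by (rule hsym_commutator_coords)
       (simp_all add: Ga_def hc_def levi_civita_symmetric[OF q] metric_symmetric[OF q] levi_civita_metric[OF q])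
  have "mu q * hsym (\<lambda>i j. pd a (h i j) q) b k i j - mu q * hsym (\<lambda>i j. pd b (h i j) q) a k i j
     = mu q * (hsym (\<lambda>i j. pd a (h i j) q) b k i j - hsym (\<lambda>i j. pd b (h i j) q) a k i j)"
    by (simp only: right_diff_distrib)
  also have "\<dots> = (\<Sum>m\<in>UNIV. Ga k b m * Q a m i j - Ga m b i * Q a k m j - Ga m b j * Q a k i m)
         - (\<Sum>m\<in>UNIV. Ga k a m * Q b m i j - Ga m a i * Q b k m j - Ga m a j * Q b k i m)"
    unfolding hsym_terms Q_def by (simp add: sum_distrib_left algebra_simps)
  finally have metric_terms: "mu q * hsym (\<lambda>i j. pd a (h i j) q) b k i j - mu q * hsym (\<lambda>i j. pd b (h i j) q) a k i j
     = (\<Sum>m\<in>UNIV. Ga k b m * Q a m i j - Ga m b i * Q a k m j - Ga m b j * Q a k i m)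
         - (\<Sum>m\<in>UNIV. Ga k a m * Q b m i j - Ga m a i * Q b k m j - Ga m a j * Q b k i m)" .
  have "pd a mu q * hsym hc b k i j - pd b mu q * hsym hc a k i j
     = (\<Sum>m\<in>UNIV. (dGa a k b m - dGa b k a m + (\<Sum>l\<in>UNIV. Ga k a l * Ga l b m - Ga k b l * Ga l a m)) * K m i j)
       - (\<Sum>m\<in>UNIV. (dGa a m b i - dGa b m a i + (\<Sum>l\<in>UNIV. Ga m a l * Ga l b i - Ga m b l * Ga l a i)) * K k m j)
       - (\<Sum>m\<in>UNIV. (dGa a m b j - dGa b m a j + (\<Sum>l\<in>UNIV. Ga m a l * Ga l b j - Ga m b l * Ga l a j)) * K k i m)"
    using pd_cov_deriv_K_isotropic[OF q, of a b k i j] pd_cov_deriv_K_isotropic[OF q, of b a k i j]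
      pd_cov_deriv_K[OF q, of a b k i j] pd_cov_deriv_K[OF q, of b a k i j] ricci metric_terms
    unfolding hc_def K_def dGa_def dK_def Ga_def by linarith
  also have "\<dots> = (\<Sum>m\<in>UNIV. gauss_curvature eps hc K a k b m * K m i j)
       - (\<Sum>m\<in>UNIV. gauss_curvature eps hc K a m b i * K k m j)
       - (\<Sum>m\<in>UNIV. gauss_curvature eps hc K a m b j * K k i m)"
    unfolding dGa_def Ga_def levi_civita_curvature[OF q] hc_def K_def ..
  finally show ?thesis .
qed

end

section \<open>Bilinear algebra at a point\<close>

definition bmap :: "('n::finite \<Rightarrow> 'n \<Rightarrow> 'n \<Rightarrow> real) \<Rightarrow> real^'n \<Rightarrow> real^'n \<Rightarrow> real^'n" where
  "bmap Kc u v = (\<chi> k. \<Sum>i\<in>UNIV. \<Sum>j\<in>UNIV. Kc k i j * u$i * v$j)"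
definition bform :: "('n::finite \<Rightarrow> 'n \<Rightarrow> real) \<Rightarrow> real^'n \<Rightarrow> real^'n \<Rightarrow> real" where
  "bform hc u v = (\<Sum>i\<in>UNIV. \<Sum>j\<in>UNIV. hc i j * u$i * v$j)"
definition curv_op ::
  "real \<Rightarrow> ('n::finite \<Rightarrow> 'n \<Rightarrow> real) \<Rightarrow> ('n \<Rightarrow> 'n \<Rightarrow> 'n \<Rightarrow> real) \<Rightarrow> real^'n \<Rightarrow> real^'n \<Rightarrow> real^'n \<Rightarrow> real^'n"
  where "curv_op eps hc Kc u v w = eps *\<^sub>R (bform hc v w *\<^sub>R u - bform hc u w *\<^sub>R v) - bmap Kc u (bmap Kc v w) + bmap Kc v (bmap Kc u w)"
definition hsym_op :: "('n::finite \<Rightarrow> 'n \<Rightarrow> real) \<Rightarrow> real^'n \<Rightarrow> real^'n \<Rightarrow> real^'n \<Rightarrow> real^'n"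
  where "hsym_op hc v w z = bform hc w z *\<^sub>R v + bform hc v w *\<^sub>R z + bform hc v z *\<^sub>R w"

lemma bmap_add_left: "bmap Kc (x + y) z = bmap Kc x z + bmap Kc y z"
  by (simp add: bmap_def vec_eq_iff algebra_simps sum.distrib)

lemma bmap_add_right: "bmap Kc z (x + y) = bmap Kc z x + bmap Kc z y"
  by (simp add: bmap_def vec_eq_iff algebra_simps sum.distrib)

lemma bmap_scaleR_left: "bmap Kc (c *\<^sub>R x) z = c *\<^sub>R bmap Kc x z"
  by (simp add: bmap_def vec_eq_iff algebra_simps sum_distrib_left)

lemma bmap_scaleR_right: "bmap Kc z (c *\<^sub>R x) = c *\<^sub>R bmap Kc z x"
  by (simp add: bmap_def vec_eq_iff algebra_simps sum_distrib_left)

lemma bform_add_left: "bform hc (x + y) z = bform hc x z + bform hc y z"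
  by (simp add: bform_def algebra_simps sum.distrib)

lemma bform_add_right: "bform hc z (x + y) = bform hc z x + bform hc z y"
  by (simp add: bform_def algebra_simps sum.distrib)

lemma bform_scaleR_left: "bform hc (c *\<^sub>R x) z = c * bform hc x z"
  by (simp add: bform_def algebra_simps sum_distrib_left)

lemma bform_scaleR_right: "bform hc z (c *\<^sub>R x) = c * bform hc z x"
  by (simp add: bform_def algebra_simps sum_distrib_left)

lemma bmap_diff_left: "bmap Kc (x - y) z = bmap Kc x z - bmap Kc y z"
  using bmap_add_left[of Kc "x - y" y z] by simp

lemma bmap_diff_right: "bmap Kc z (x - y) = bmap Kc z x - bmap Kc z y"
  using bmap_add_right[of Kc z "x - y" y] by simp

lemma bform_diff_left: "bform hc (x - y) z = bform hc x z - bform hc y z"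
  using bform_add_left[of hc "x - y" y z] by simp

lemma bform_diff_right: "bform hc z (x - y) = bform hc z x - bform hc z y"
  using bform_add_right[of hc z "x - y" y] by simp

lemmas bilinear_simps = bmap_add_left bmap_add_right bmap_scaleR_left bmap_scaleR_right
  bmap_diff_left bmap_diff_right bform_add_left bform_add_right bform_scaleR_left bform_scaleR_right
  bform_diff_left bform_diff_right

lemma linear_zero_on_axes:
  fixes f :: "real^'n::finite \<Rightarrow> 'v::real_vector"
  assumes "linear f" "\<And>a. f (axis a 1) = 0"
  shows "f u = 0"
proof -
  have "u = (\<Sum>a\<in>UNIV. u$a *\<^sub>R axis a 1)"
    using basis_expansion[of u] by (simp add: scalar_mult_eq_scaleR)
  then have "f u = (\<Sum>a\<in>UNIV. u$a *\<^sub>R f (axis a 1))"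
    by (metis (no_types, lifting) assms(1) linear_sum linear_scale sum.cong)
  then show ?thesis using assms(2) by simp
qed

text \<open>\<open>d\<mu>(u) S(v,w,z) - d\<mu>(v) S(u,w,z) - (R(u,v)\<cdot>K)(w,z)\<close>.\<close>
definition ricci_defect ::
  "real \<Rightarrow> ('n::finite \<Rightarrow> 'n \<Rightarrow> real) \<Rightarrow> ('n \<Rightarrow> 'n \<Rightarrow> 'n \<Rightarrow> real) \<Rightarrow> (real^'n \<Rightarrow> real)
     \<Rightarrow> real^'n \<Rightarrow> real^'n \<Rightarrow> real^'n \<Rightarrow> real^'n \<Rightarrow> real^'n"
  where "ricci_defect eps hc Kc sg u v w z = sg u *\<^sub>R hsym_op hc v w z - sg v *\<^sub>R hsym_op hc u w z
     - (curv_op eps hc Kc u v (bmap Kc w z) - bmap Kc (curv_op eps hc Kc u v w) z - bmap Kc w (curv_op eps hc Kc u v z))"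

lemma ricci_defect_linear:
  assumes sg: "linear sg"
  shows "linear (\<lambda>u. ricci_defect eps hc Kc sg u v w z)" "linear (\<lambda>v. ricci_defect eps hc Kc sg u v w z)"
    "linear (\<lambda>w. ricci_defect eps hc Kc sg u v w z)" "linear (\<lambda>z. ricci_defect eps hc Kc sg u v w z)"
  using linear_add[OF sg] linear_scale[OF sg]
  by (auto intro!: linearI simp: ricci_defect_def curv_op_def hsym_op_def bilinear_simps algebra_simps)

lemma axis_component [simp]: "axis i (1::real) $ m = (if m = i then 1 else 0)"
  by (simp add: axis_def)

lemma sum_mult_delta [simp]:
  fixes f :: "'n::finite \<Rightarrow> real"
  shows "(\<Sum>m\<in>UNIV. f m * (if m = j then 1 else 0)) = f j"
    and "(\<Sum>m\<in>UNIV. f m * (if m = j then 1 else 0) * c) = f j * c"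
  by (simp_all add: if_distrib[of "\<lambda>x. _ * x"] if_distrib[of "\<lambda>x. x * _"] cong: if_cong)

lemma bmap_axis_right: "bmap Kc y (axis j 1) = (\<chi> k. \<Sum>m\<in>UNIV. Kc k m j * y$m)"
  unfolding bmap_def by simp

lemma bmap_axis_left: "bmap Kc (axis i 1) y = (\<chi> k. \<Sum>m\<in>UNIV. Kc k i m * y$m)"
  unfolding bmap_def by (subst sum.swap) simp

lemma bform_axis_left: "bform hc (axis i 1) y = (\<Sum>m\<in>UNIV. hc i m * y$m)"
  unfolding bform_def by (subst sum.swap) simp

lemma bform_axis_right: "bform hc y (axis j 1) = (\<Sum>m\<in>UNIV. hc m j * y$m)"
  unfolding bform_def by simp

lemma curv_op_axes: "curv_op eps hc Kc (axis a 1) (axis b 1) y = (\<chi> k. \<Sum>m\<in>UNIV. gauss_curvature eps hc Kc a k b m * y$m)"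
proof -
  have compose: "(\<Sum>m\<in>UNIV. (\<Sum>l\<in>UNIV. Kc k c l * Kc l d m) * y$m) = (\<Sum>m\<in>UNIV. Kc k c m * (\<Sum>l\<in>UNIV. Kc m d l * y$l))"
    for k c d
  proof -
    have "(\<Sum>m\<in>UNIV. (\<Sum>l\<in>UNIV. Kc k c l * Kc l d m) * y$m) = (\<Sum>m\<in>UNIV. \<Sum>l\<in>UNIV. Kc k c l * (Kc l d m * y$m))"
      by (simp add: sum_distrib_right mult.assoc)
    also have "\<dots> = (\<Sum>l\<in>UNIV. \<Sum>m\<in>UNIV. Kc k c l * (Kc l d m * y$m))" by (rule sum.swap)
    also have "\<dots> = (\<Sum>m\<in>UNIV. Kc k c m * (\<Sum>l\<in>UNIV. Kc m d l * y$l))" by (simp add: sum_distrib_left)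
    finally show ?thesis .
  qed
  have expand: "(\<Sum>m\<in>UNIV. gauss_curvature eps hc Kc a k b m * y$m) =
     eps * ((\<Sum>m\<in>UNIV. hc b m * y$m) * (if k = a then 1 else 0) - (\<Sum>m\<in>UNIV. hc a m * y$m) * (if k = b then 1 else 0))
     - (\<Sum>m\<in>UNIV. (\<Sum>l\<in>UNIV. Kc k a l * Kc l b m) * y$m) + (\<Sum>m\<in>UNIV. (\<Sum>l\<in>UNIV. Kc k b l * Kc l a m) * y$m)" for k
    unfolding gauss_curvature_def
    by (simp add: sum_subtractf sum.distrib sum_distrib_left sum_distrib_right algebra_simps split del: if_split)
  show ?thesis
    unfolding vec_eq_iff
  proof
    fix k
    show "curv_op eps hc Kc (axis a 1) (axis b 1) y $ k = (\<chi> k. \<Sum>m\<in>UNIV. gauss_curvature eps hc Kc a k b m * y$m) $ k"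
      unfolding expand vec_lambda_beta compose curv_op_def
      by (simp add: bmap_axis_left bform_axis_left split del: if_split)
  qed
qed

lemma ricci_defect_axes:
  fixes Kc :: "'n::finite \<Rightarrow> 'n \<Rightarrow> 'n \<Rightarrow> real"
  assumes hc_sym: "\<And>i j. hc i j = hc j i"
    and coords: "\<And>a b k i j. sg (axis a 1) * hsym hc b k i j - sg (axis b 1) * hsym hc a k i j
      = (\<Sum>m\<in>UNIV. gauss_curvature eps hc Kc a k b m * Kc m i j)
        - (\<Sum>m\<in>UNIV. gauss_curvature eps hc Kc a m b i * Kc k m j)
        - (\<Sum>m\<in>UNIV. gauss_curvature eps hc Kc a m b j * Kc k i m)"
  shows "ricci_defect eps hc Kc sg (axis a 1) (axis b 1) (axis i 1) (axis j 1) = 0"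
proof -
  have hsym_axes: "hsym_op hc (axis b 1) (axis i 1) (axis j 1) = (\<chi> k. hsym hc b k i j)" for b
    unfolding hsym_op_def hsym_def vec_eq_iff by (auto simp: bform_axis_left hc_sym)
  have curv_axes: "curv_op eps hc Kc (axis a 1) (axis b 1) (axis c 1) = (\<chi> m. gauss_curvature eps hc Kc a m b c)" for c
    by (simp add: curv_op_axes)
  have "curv_op eps hc Kc (axis a 1) (axis b 1) (bmap Kc (axis i 1) (axis j 1))
      = (\<chi> k. \<Sum>m\<in>UNIV. gauss_curvature eps hc Kc a k b m * Kc m i j)"
    by (simp add: bmap_axis_left curv_op_axes)
  moreover have "bmap Kc (curv_op eps hc Kc (axis a 1) (axis b 1) (axis i 1)) (axis j 1)
      = (\<chi> k. \<Sum>m\<in>UNIV. gauss_curvature eps hc Kc a m b i * Kc k m j)"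
    by (simp add: curv_axes bmap_axis_right mult.commute)
  moreover have "bmap Kc (axis i 1) (curv_op eps hc Kc (axis a 1) (axis b 1) (axis j 1))
      = (\<chi> k. \<Sum>m\<in>UNIV. gauss_curvature eps hc Kc a m b j * Kc k i m)"
    by (simp add: curv_axes bmap_axis_left mult.commute)
  ultimately show ?thesis
    unfolding ricci_defect_def hsym_axes vec_eq_iff using coords by simp
qed

lemma ricci_defect_zero:
  fixes Kc :: "'n::finite \<Rightarrow> 'n \<Rightarrow> 'n \<Rightarrow> real"
  assumes sg: "linear sg" and ax: "\<And>a b i j. ricci_defect eps hc Kc sg (axis a 1) (axis b 1) (axis i 1) (axis j 1) = 0"
  shows "ricci_defect eps hc Kc sg u v w z = 0"
proof -
  have h1: "ricci_defect eps hc Kc sg (axis a 1) (axis b 1) (axis i 1) z = 0" for a b i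
    by (rule linear_zero_on_axes[OF ricci_defect_linear(4)[OF sg]]) (simp add: ax)
  have h2: "ricci_defect eps hc Kc sg (axis a 1) (axis b 1) w z = 0" for a b
    by (rule linear_zero_on_axes[OF ricci_defect_linear(3)[OF sg]]) (simp add: h1)
  have h3: "ricci_defect eps hc Kc sg (axis a 1) v w z = 0" for a
    by (rule linear_zero_on_axes[OF ricci_defect_linear(2)[OF sg]]) (simp add: h2)
  show ?thesis
    by (rule linear_zero_on_axes[OF ricci_defect_linear(1)[OF sg]]) (simp add: h3)
qed

lemma bform_sum_left: "finite A \<Longrightarrow> bform hc (\<Sum>x\<in>A. f x) w = (\<Sum>x\<in>A. bform hc (f x) w)"
  by (induction A rule: finite_induct) (simp add: bform_def, simp add: bform_add_left)

lemma bform_sum_right: "finite A \<Longrightarrow> bform hc w (\<Sum>x\<in>A. f x) = (\<Sum>x\<in>A. bform hc w (f x))"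
  by (induction A rule: finite_induct) (simp add: bform_def, simp add: bform_add_right)

lemma bmap_commute: assumes "\<And>k i j. Kc k i j = Kc k j i" shows "bmap Kc u v = bmap Kc v u"
proof -
  have "\<And>k. (\<Sum>i\<in>UNIV. \<Sum>j\<in>UNIV. Kc k i j * u$i * v$j) = (\<Sum>i\<in>UNIV. \<Sum>j\<in>UNIV. Kc k i j * v$i * u$j)"
    by (subst sum.swap) (simp add: assms mult_ac)
  then show ?thesis unfolding bmap_def vec_eq_iff by simp
qed

lemma bform_commute: assumes "\<And>i j. hc i j = hc j i" shows "bform hc u v = bform hc v u"
  unfolding bform_def by (subst sum.swap) (simp add: assms mult_ac)

lemma curv_op_scaleR: "curv_op eps hc Kc u v (c *\<^sub>R w) = c *\<^sub>R curv_op eps hc Kc u v w"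
  by (simp add: curv_op_def bilinear_simps algebra_simps)

lemma bform_bmap_swap:
  fixes Kc :: "'n::finite \<Rightarrow> 'n \<Rightarrow> 'n \<Rightarrow> real"
  assumes Ks: "\<And>k i j. Kc k i j = Kc k j i" and hs: "\<And>i j. hc i j = hc j i"
    and Cc: "\<And>l i j. (\<Sum>m\<in>UNIV. Kc m i j * hc l m) = (\<Sum>m\<in>UNIV. Kc m l j * hc i m)"
  shows "bform hc (bmap Kc u v) w = bform hc (bmap Kc u w) v"
proof -
  define F where "F u v w = bform hc (bmap Kc u v) w - bform hc (bmap Kc u w) v" for u v w
  have l1: "linear (\<lambda>u. F u v w)" for v w by (rule linearI) (simp_all add: F_def bilinear_simps algebra_simps)
  have l2: "linear (\<lambda>v. F u v w)" for u w by (rule linearI) (simp_all add: F_def bilinear_simps algebra_simps)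
  have l3: "linear (\<lambda>w. F u v w)" for u v by (rule linearI) (simp_all add: F_def bilinear_simps algebra_simps)
  have ax: "F (axis a 1) (axis b 1) (axis c 1) = 0" for a b c
  proof -
    have e: "bform hc (bmap Kc (axis a 1) (axis b 1)) (axis c 1) = (\<Sum>m\<in>UNIV. Kc m a b * hc c m)" for a b c
      by (simp add: bmap_axis_left bform_axis_right hs mult.commute)
    have "(\<Sum>m\<in>UNIV. Kc m a b * hc c m) = (\<Sum>m\<in>UNIV. Kc m b a * hc c m)" by (simp add: Ks)
    also have "\<dots> = (\<Sum>m\<in>UNIV. Kc m c a * hc b m)" by (rule Cc)
    also have "\<dots> = (\<Sum>m\<in>UNIV. Kc m a c * hc b m)" by (simp add: Ks)
    finally show ?thesis unfolding F_def e by simp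
  qed
  have "F (axis a 1) (axis b 1) w = 0" for a b by (rule linear_zero_on_axes[OF l3]) (simp add: ax)
  then have "F (axis a 1) v w = 0" for a by (rule linear_zero_on_axes[OF l2])
  then have "F u v w = 0" by (rule linear_zero_on_axes[OF l1])
  then show ?thesis unfolding F_def by simp
qed

lemma bform_orthonormal_sum:
  fixes e :: "nat \<Rightarrow> real^'n::finite"
  assumes orth: "\<forall>i\<in>I. \<forall>j\<in>I. bform hc (e i) (e j) = (if i = j then 1 else 0)" and fin: "finite I" and j: "j \<in> I"
  shows "bform hc (\<Sum>i\<in>I. c i *\<^sub>R e i) (e j) = c j"
proof -
  have "bform hc (\<Sum>i\<in>I. c i *\<^sub>R e i) (e j) = (\<Sum>i\<in>I. c i * bform hc (e i) (e j))"
    by (simp add: bform_sum_left[OF fin] bform_scaleR_left)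
  also have "\<dots> = (\<Sum>i\<in>I. if i = j then c i else 0)"
    by (rule sum.cong) (use orth j in auto)
  also have "\<dots> = c j" using fin j by simp
  finally show ?thesis .
qed

lemma orthonormal_frame_spans:
  fixes e :: "nat \<Rightarrow> real^'n::finite"
  assumes orth: "\<forall>i\<in>{1..CARD('n)}. \<forall>j\<in>{1..CARD('n)}. bform hc (e i) (e j) = (if i = j then 1 else 0)"
  shows "\<exists>c. y = (\<Sum>i\<in>{1..CARD('n)}. c i *\<^sub>R e i)"
proof -
  define I where "I = {1..CARD('n)}"
  have fin: "finite (e ` I)" unfolding I_def by simp
  have inj: "inj_on e I"
  proof (rule inj_onI)
    fix i j assume ij: "i \<in> I" "j \<in> I" "e i = e j"
    then have "bform hc (e i) (e j) = 1" using orth unfolding I_def by auto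
    then show "i = j" using orth ij(1,2) unfolding I_def by (auto split: if_splits)
  qed
  have "independent (e ` I)"
    unfolding eucl.independent_explicit
  proof (intro conjI finite_imageI allI impI ballI)
    fix c v assume zero: "(\<Sum>v\<in>e ` I. c v *\<^sub>R v) = 0" and "v \<in> e ` I"
    then obtain j where j: "j \<in> I" "v = e j" by auto
    have "c (e j) = bform hc (\<Sum>i\<in>I. c (e i) *\<^sub>R e i) (e j)"
      by (rule bform_orthonormal_sum[symmetric]) (use orth j in \<open>auto simp: I_def\<close>)
    also have "\<dots> = 0" using zero by (simp add: sum.reindex[OF inj] bform_def)
    finally show "c v = 0" using j by simp
  qed (simp add: I_def)
  moreover have "card (e ` I) = CARD('n)" using card_image[OF inj] by (simp add: I_def)
  ultimately have "y \<in> span (e ` I)"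
    using eucl.card_eq_dim[of "e ` I" UNIV] fin by auto
  then obtain c where "y = (\<Sum>v\<in>e ` I. c v *\<^sub>R v)" using real_vector.span_finite[OF fin] by auto
  then have "y = (\<Sum>i\<in>I. c (e i) *\<^sub>R e i)" by (simp add: sum.reindex[OF inj])
  then show ?thesis unfolding I_def by (rule exI[where x = "\<lambda>i. c (e i)"])
qed

lemma orthonormal_expansion:
  fixes e :: "nat \<Rightarrow> real^'n::finite"
  assumes orth: "\<forall>i\<in>{1..CARD('n)}. \<forall>j\<in>{1..CARD('n)}. bform hc (e i) (e j) = (if i = j then 1 else 0)"
  shows "y = (\<Sum>i\<in>{1..CARD('n)}. bform hc y (e i) *\<^sub>R e i)"
proof -
  obtain c where "y = (\<Sum>i\<in>{1..CARD('n)}. c i *\<^sub>R e i)"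
    using orthonormal_frame_spans[OF orth] by blast
  moreover have "bform hc (\<Sum>i\<in>{1..CARD('n)}. c i *\<^sub>R e i) (e j) = c j" if "j \<in> {1..CARD('n)}" for j
    by (rule bform_orthonormal_sum) (use orth that in auto)
  ultimately show ?thesis by simp
qed

context isotropic_chart
begin

lemma ricci_defect_vanishes:
  assumes q: "q \<in> U"
  shows "ricci_defect eps (\<lambda>i j. h i j q) (\<lambda>k i j. diff_tensor G hG k i j q) (frechet_derivative mu (at q))
           u v w z = 0"
proof (rule ricci_defect_zero)
  show "linear (frechet_derivative mu (at q))"
    by (rule linear_frechet_derivative[OF smooth_on_imp_differentiable[OF smooth_mu open_U q]])
  show "ricci_defect eps (\<lambda>i j. h i j q) (\<lambda>k i j. diff_tensor G hG k i j q) (frechet_derivative mu (at q))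
          (axis a 1) (axis b 1) (axis i 1) (axis j 1) = 0" for a b i j
    by (rule ricci_defect_axes) (simp_all add: metric_symmetric[OF q] ricci_identity_coords[OF q] flip: pd_def)
qed

end

section \<open>The eigenframe of \<open>K\<^sub>e\<^sub>1\<close>\<close>

declare One_nat_def [simp del] \<comment> \<open>keeps the frame index \<open>1\<close> from turning into \<open>Suc 0\<close>\<close>

lemma numeral_mult_vec: "(numeral n :: real^'n::finite) * x = numeral n *\<^sub>R x"
  by (simp add: vec_eq_iff)

lemma vec_mult_numeral: "x * (numeral n :: real^'n::finite) = numeral n *\<^sub>R x"
  by (simp add: vec_eq_iff)

locale isotropic_eigenframe =
  fixes hc :: "'n::finite \<Rightarrow> 'n \<Rightarrow> real" and Kc :: "'n \<Rightarrow> 'n \<Rightarrow> 'n \<Rightarrow> real"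
    and dmu :: "real^'n \<Rightarrow> real" and eps :: real and e :: "nat \<Rightarrow> real^'n" and lam :: "nat \<Rightarrow> real"
  assumes hc_sym: "\<And>i j. hc i j = hc j i"
    and Kc_sym: "\<And>k i j. Kc k i j = Kc k j i"
    and cubic_sym: "\<And>l i j. (\<Sum>m\<in>UNIV. Kc m i j * hc l m) = (\<Sum>m\<in>UNIV. Kc m l j * hc i m)"
    and ricci_identity: "\<And>u v w z. ricci_defect eps hc Kc dmu u v w z = 0"
    and linear_dmu: "linear dmu"
    and orthonormal: "\<forall>i\<in>{1..CARD('n)}. \<forall>j\<in>{1..CARD('n)}. bform hc (e i) (e j) = (if i = j then 1 else 0)"
    and eigen: "\<forall>i\<in>{1..CARD('n)}. bmap Kc (e 1) (e i) = lam i *\<^sub>R e i"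
begin

lemma bform_sym: "bform hc u v = bform hc v u"
  by (rule bform_commute[OF hc_sym])

lemma bmap_sym: "bmap Kc u v = bmap Kc v u"
  by (rule bmap_commute[OF Kc_sym])

lemma cubic_swap: "bform hc (bmap Kc u v) w = bform hc (bmap Kc u w) v"
  by (rule bform_bmap_swap[OF Kc_sym hc_sym cubic_sym])

lemma frame_orthonormal:
  "i \<in> {1..CARD('n)} \<Longrightarrow> j \<in> {1..CARD('n)} \<Longrightarrow> bform hc (e i) (e j) = (if i = j then 1 else 0)"
  using orthonormal by blast

lemma one_in_frame: "1 \<in> {1..CARD('n)}"
  using finite_UNIV_card_ge_0[where 'a='n] by (simp add: One_nat_def Suc_le_eq)

lemma eigen_left: "i \<in> {1..CARD('n)} \<Longrightarrow> bmap Kc (e 1) (e i) = lam i *\<^sub>R e i"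
  using eigen by blast

lemma eigen_right: "i \<in> {1..CARD('n)} \<Longrightarrow> bmap Kc (e i) (e 1) = lam i *\<^sub>R e i"
  using eigen_left bmap_sym by metis

lemma bform_eigen: "b \<in> {1..CARD('n)} \<Longrightarrow> bform hc (bmap Kc (e 1) y) (e b) = lam b * bform hc y (e b)"
  using cubic_swap[of "e 1" y "e b"] eigen_left[of b] by (simp add: bform_scaleR_left bform_scaleR_right bform_sym)

lemma dmu_frame:
  assumes b: "b \<in> {2..CARD('n)}"
  shows "dmu (e b) = 0"
    and "dmu (e 1) = (lam 1 - 2 * lam b) * (lam 1 * lam b - lam b * lam b - eps)"
proof -
  have bI: "b \<in> {1..CARD('n)}" and b1: "b \<noteq> 1" using b by auto
  have unit1: "bform hc (e 1) (e 1) = 1" using frame_orthonormal[OF one_in_frame one_in_frame] by simp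
  have unitb: "bform hc (e b) (e b) = 1" using frame_orthonormal[OF bI bI] by simp
  have orth1b: "bform hc (e 1) (e b) = 0" using frame_orthonormal[OF one_in_frame bI] b1 by simp
  have orthb1: "bform hc (e b) (e 1) = 0" using frame_orthonormal[OF bI one_in_frame] b1 by simp
  define c where "c = lam 1 * lam b - lam b * lam b - eps"
  have curv: "curv_op eps hc Kc (e 1) (e b) (e 1) = c *\<^sub>R e b"
    unfolding curv_op_def c_def
    by (simp add: orthb1 unit1 eigen_right[OF bI] eigen_left[OF bI] eigen_left[OF one_in_frame]
        bmap_scaleR_left bmap_scaleR_right algebra_simps)
  note simps = curv unit1 orthb1 orth1b unitb curv_op_scaleR eigen_left[OF one_in_frame] eigen_left[OF bI]
    eigen_right[OF bI] bmap_scaleR_left bmap_scaleR_right bform_add_left bform_diff_left bform_scaleR_left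
    ricci_defect_def hsym_op_def numeral_mult_vec vec_mult_numeral
  have "bform hc (ricci_defect eps hc Kc dmu (e 1) (e b) (e 1) (e 1)) (e 1) = 0"
    by (simp add: ricci_identity bform_def)
  then show "dmu (e b) = 0" by (simp add: simps)
  have "bform hc (ricci_defect eps hc Kc dmu (e 1) (e b) (e 1) (e 1)) (e b) = 0"
    by (simp add: ricci_identity bform_def)
  then have "dmu (e 1) = lam 1 * c - 2 * c * lam b" by (simp add: simps algebra_simps)
  then show "dmu (e 1) = (lam 1 - 2 * lam b) * (lam 1 * lam b - lam b * lam b - eps)"
    by (simp add: c_def algebra_simps)
qed

lemma dmu_first_nonzero:
  assumes "dmu \<noteq> (\<lambda>v. 0)"
  shows "dmu (e 1) \<noteq> 0"
proof
  assume first: "dmu (e 1) = 0"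
  have "dmu v = 0" for v
  proof -
    have "dmu v = dmu (\<Sum>i\<in>{1..CARD('n)}. bform hc v (e i) *\<^sub>R e i)"
      using orthonormal_expansion[OF orthonormal, of v] by simp
    also have "\<dots> = (\<Sum>i\<in>{1..CARD('n)}. bform hc v (e i) * dmu (e i))"
      by (simp add: linear_sum[OF linear_dmu] linear_scale[OF linear_dmu])
    also have "\<dots> = 0"
    proof (rule sum.neutral, rule ballI)
      fix i assume "i \<in> {1..CARD('n)}"
      then have "i = 1 \<or> i \<in> {2..CARD('n)}" by auto
      then show "bform hc v (e i) * dmu (e i) = 0" using first dmu_frame(1) by auto
    qed
    finally show ?thesis .
  qed
  with assms show False by auto
qed

lemma cubic_eigen_relation:
  assumes f: "f \<in> {2..CARD('n)}" and b: "b \<in> {2..CARD('n)}"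
  shows "(lam 1 - 2 * lam b) * (lam f - lam b) * bform hc (bmap Kc (e f) (e b)) (e b) = 0"
proof -
  have bI: "b \<in> {1..CARD('n)}" and b1: "b \<noteq> 1" using b by auto
  have fI: "f \<in> {1..CARD('n)}" and f1: "f \<noteq> 1" using f by auto
  have orthb1: "bform hc (e b) (e 1) = 0" using frame_orthonormal[OF bI one_in_frame] b1 by simp
  have orthf1: "bform hc (e f) (e 1) = 0" using frame_orthonormal[OF fI one_in_frame] f1 by simp
  have curv: "curv_op eps hc Kc (e f) (e b) (e 1) = (lam f - lam b) *\<^sub>R bmap Kc (e f) (e b)"
    unfolding curv_op_def
    by (simp add: orthb1 orthf1 eigen_right[OF bI] eigen_right[OF fI] bmap_sym[of "e b" "e f"]
        bmap_scaleR_left bmap_scaleR_right algebra_simps)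
  have "bform hc (ricci_defect eps hc Kc dmu (e f) (e b) (e 1) (e 1)) (e b) = 0"
    by (simp add: ricci_identity bform_def)
  then show ?thesis
    by (simp add: dmu_frame(1)[OF f] dmu_frame(1)[OF b] curv curv_op_scaleR eigen_left[OF one_in_frame]
        bmap_scaleR_left bmap_scaleR_right bmap_diff_left bmap_diff_right bmap_sym[of "bmap Kc (e f) (e b)" "e 1"]
        bform_eigen[OF bI] bform_add_left bform_diff_left bform_scaleR_left ricci_defect_def hsym_op_def
        numeral_mult_vec vec_mult_numeral algebra_simps)
qed

lemma cubic_first: "b \<in> {1..CARD('n)} \<Longrightarrow> bform hc (bmap Kc (e b) (e b)) (e 1) = lam b"
  using cubic_swap[of "e b" "e b" "e 1"] eigen_right[of b] frame_orthonormal[of b b]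
  by (simp add: bform_scaleR_left)

text \<open>Expanding \<open>w = K(e\<^sub>b, e\<^sub>b)\<close> in the frame, only its \<open>e\<^sub>1\<close>-component survives,
  because \<open>h(w, e\<^sub>f) = h(K(e\<^sub>f, e\<^sub>b), e\<^sub>b)\<close> vanishes unless \<open>\<lambda>\<^sub>f = \<lambda>\<^sub>b\<close>.\<close>
lemma cubic_square_identity:
  assumes b: "b \<in> {2..CARD('n)}" and ne: "lam 1 \<noteq> 2 * lam b"
  defines "w \<equiv> bmap Kc (e b) (e b)"
  shows "lam b * bform hc w w - bform hc w (bmap Kc (e 1) w) = (lam b - lam 1) * lam b * lam b"
proof -
  define I where "I = {1..CARD('n)}"
  have finI: "finite I" unfolding I_def by simp
  have expand: "bform hc w u = (\<Sum>f\<in>I. bform hc u (e f) * bform hc w (e f))" for u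
  proof -
    have "bform hc w u = bform hc w (\<Sum>f\<in>I. bform hc u (e f) *\<^sub>R e f)"
      unfolding I_def using orthonormal_expansion[OF orthonormal, of u] by simp
    then show ?thesis by (simp add: bform_sum_right[OF finI] bform_scaleR_right)
  qed
  have other_terms: "(lam b - lam f) * bform hc w (e f) * bform hc w (e f) = 0" if f: "f \<in> {2..CARD('n)}" for f
  proof -
    have "bform hc w (e f) = bform hc (bmap Kc (e f) (e b)) (e b)"
      unfolding w_def using cubic_swap[of "e b" "e b" "e f"] bmap_sym[of "e b" "e f"] by simp
    then have "(lam f - lam b) * bform hc w (e f) = 0"
      using cubic_eigen_relation[OF f b] ne by (simp add: mult.assoc)
    then show ?thesis by auto
  qed
  have eigen_sum: "(\<Sum>f\<in>I. bform hc (bmap Kc (e 1) w) (e f) * bform hc w (e f))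
      = (\<Sum>f\<in>I. lam f * bform hc w (e f) * bform hc w (e f))"
    by (rule sum.cong) (auto simp: bform_eigen I_def)
  have "lam b * bform hc w w - bform hc w (bmap Kc (e 1) w)
      = (\<Sum>f\<in>I. (lam b - lam f) * bform hc w (e f) * bform hc w (e f))"
    unfolding expand[of w] expand[of "bmap Kc (e 1) w"] eigen_sum
    by (simp add: sum_distrib_left sum_subtractf algebra_simps)
  also have "\<dots> = (lam b - lam 1) * bform hc w (e 1) * bform hc w (e 1)"
  proof -
    have "I = insert 1 {2..CARD('n)}" unfolding I_def using one_in_frame by auto
    then show ?thesis by (simp add: other_terms)
  qed
  finally show ?thesis
    using cubic_first[of b] b unfolding w_def by simp
qed

lemma dmu_first_cubic:
  assumes b: "b \<in> {2..CARD('n)}" and ne: "lam 1 \<noteq> 2 * lam b"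
  shows "dmu (e 1) = - (eps * lam b + (lam b - lam 1) * lam b * lam b)"
proof -
  have bI: "b \<in> {1..CARD('n)}" and b1: "b \<noteq> 1" using b by auto
  have unitb: "bform hc (e b) (e b) = 1" using frame_orthonormal[OF bI bI] by simp
  have orth1b: "bform hc (e 1) (e b) = 0" using frame_orthonormal[OF one_in_frame bI] b1 by simp
  define w where "w = bmap Kc (e b) (e b)"
  have w1: "bform hc w (e 1) = lam b" "bform hc (e 1) w = lam b"
    using cubic_first[OF bI] bform_sym unfolding w_def by metis+
  have cubic_w: "bform hc (bmap Kc X (e b)) (e b) = bform hc w X" "bform hc (bmap Kc (e b) X) (e b) = bform hc w X"
    for X unfolding w_def using cubic_swap[of "e b" X "e b"] bmap_sym[of X "e b"] by simp_all
  have "bform hc (bmap Kc (e 1) (bmap Kc (e b) w)) (e b) = lam b * bform hc w w"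
    using bform_eigen[OF bI, of "bmap Kc (e b) w"] cubic_w(2)[of w] by simp
  then have curv_w: "bform hc (curv_op eps hc Kc (e 1) (e b) w) (e b)
      = - eps * lam b - lam b * bform hc w w + bform hc w (bmap Kc (e 1) w)"
    unfolding curv_op_def
    by (simp add: bform_add_left bform_diff_left bform_scaleR_left unitb orth1b w1 cubic_w(2) algebra_simps)
  have "curv_op eps hc Kc (e 1) (e b) (e b) = eps *\<^sub>R e 1 - bmap Kc (e 1) w + lam b *\<^sub>R w"
    unfolding curv_op_def w_def by (simp add: unitb orth1b eigen_left[OF bI] bmap_scaleR_right)
  then have w_curv: "bform hc w (curv_op eps hc Kc (e 1) (e b) (e b))
      = eps * lam b - bform hc w (bmap Kc (e 1) w) + lam b * bform hc w w"
    by (simp add: bform_add_right bform_diff_right bform_scaleR_right w1)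
  have hsym_bbb: "bform hc (hsym_op hc (e b) (e b) (e b)) (e b) = 3"
    unfolding hsym_op_def by (simp add: bform_add_left bform_scaleR_left unitb numeral_mult_vec vec_mult_numeral)
  have "bform hc (ricci_defect eps hc Kc dmu (e 1) (e b) (e b) (e b)) (e b) = 0"
    by (simp add: ricci_identity bform_def)
  then have "3 * dmu (e 1) = - eps * lam b - lam b * bform hc w w + bform hc w (bmap Kc (e 1) w)
      - 2 * (eps * lam b - bform hc w (bmap Kc (e 1) w) + lam b * bform hc w w)"
    unfolding ricci_defect_def w_def[symmetric]
    by (simp add: bform_diff_left bform_scaleR_left dmu_frame(1)[OF b] hsym_bbb curv_w cubic_w w_curv)
  then show ?thesis
    using cubic_square_identity[OF b ne] unfolding w_def[symmetric] by (simp add: algebra_simps)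
qed

lemma first_eigenvalue_triple:
  assumes nonzero: "dmu \<noteq> (\<lambda>v. 0)" and b: "b \<in> {2..CARD('n)}"
  shows "lam 1 = 3 * lam b"
proof -
  define q where "q = lam 1 * lam b - lam b * lam b - eps"
  have first: "dmu (e 1) = (lam 1 - 2 * lam b) * q"
    using dmu_frame(2)[OF b] unfolding q_def .
  have "dmu (e 1) \<noteq> 0" by (rule dmu_first_nonzero[OF nonzero])
  then have ne: "lam 1 \<noteq> 2 * lam b" and "q \<noteq> 0" using first by auto
  have "(lam 1 - 3 * lam b) * q = (lam 1 - 2 * lam b) * q + (eps * lam b + (lam b - lam 1) * lam b * lam b)"
    unfolding q_def by (simp add: algebra_simps)
  also have "\<dots> = 0" using first dmu_first_cubic[OF b ne] by simp
  finally show ?thesis using \<open>q \<noteq> 0\<close> by simp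
qed

end

lemma (in isotropic_chart) isotropic_eigenframe_at:
  assumes p: "p \<in> U"
    and orthonormal: "\<forall>i\<in>{1..CARD('n)}. \<forall>j\<in>{1..CARD('n)}. metric_at h p (e i) (e j) = (if i = j then 1 else 0)"
    and eigen: "\<forall>i\<in>{1..CARD('n)}. K_at (diff_tensor G hG) p (e 1) (e i) = lam i *\<^sub>R e i"
  shows "isotropic_eigenframe (\<lambda>i j. h i j p) (\<lambda>k i j. diff_tensor G hG k i j p)
           (frechet_derivative mu (at p)) eps e lam"
proof (rule isotropic_eigenframe.intro)
  show "h i j p = h j i p" for i j by (rule metric_symmetric[OF p])
  show "diff_tensor G hG k i j p = diff_tensor G hG k j i p" for k i j by (rule diff_tensor_symmetric[OF p])
  show "(\<Sum>m\<in>UNIV. diff_tensor G hG m i j p * h l m p) = (\<Sum>m\<in>UNIV. diff_tensor G hG m l j p * h i m p)"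
    for l i j by (rule cubic_form_symmetric[OF p])
  show "ricci_defect eps (\<lambda>i j. h i j p) (\<lambda>k i j. diff_tensor G hG k i j p) (frechet_derivative mu (at p))
      u v w z = 0" for u v w z by (rule ricci_defect_vanishes[OF p])
  show "linear (frechet_derivative mu (at p))"
    by (rule linear_frechet_derivative[OF smooth_on_imp_differentiable[OF smooth_mu open_U p]])
  show "\<forall>i\<in>{1..CARD('n)}. \<forall>j\<in>{1..CARD('n)}. bform (\<lambda>i j. h i j p) (e i) (e j) = (if i = j then 1 else 0)"
    using orthonormal unfolding metric_at_def bform_def .
  show "\<forall>i\<in>{1..CARD('n)}. bmap (\<lambda>k i j. diff_tensor G hG k i j p) (e 1) (e i) = lam i *\<^sub>R e i"
    using eigen unfolding K_at_def bmap_def .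
qed

theorem lemma4p3:
  fixes U :: "(real^'n::finite) set"
    and x :: "real^'n \<Rightarrow> real^'m::finite"
    and eps :: real
    and G hG :: "'n \<Rightarrow> 'n \<Rightarrow> 'n \<Rightarrow> real^'n \<Rightarrow> real"
    and h :: "'n \<Rightarrow> 'n \<Rightarrow> real^'n \<Rightarrow> real"
    and mu :: "real^'n \<Rightarrow> real"
    and p :: "real^'n"
    and e :: "nat \<Rightarrow> real^'n"
    and lam :: "nat \<Rightarrow> real"
  assumes hyp: "centroaffine_hypersurface U x eps G h"
    and convex: "positive_definite_on U h"
    and smooth_h: "\<forall>i j. smooth_on U (h i j)"
    and smooth_G: "\<forall>k i j. smooth_on U (G k i j)"
    and smooth_hG: "\<forall>k i j. smooth_on U (hG k i j)"
    and LC: "levi_civita U h hG"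
    and smooth_mu: "smooth_on U mu"
    and nonconst: "\<not> (\<exists>c. \<forall>q\<in>U. mu q = c)"
    and cond: "\<forall>q\<in>U. \<forall>l k i j.
        cov_deriv_K hG (diff_tensor G hG) l k i j q =
          mu q * (h i j q * (if k = l then 1 else 0) + h i l q * (if k = j then 1 else 0)
                  + h j l q * (if k = i then 1 else 0))"
    and pU: "p \<in> U"
    and dmu: "frechet_derivative mu (at p) \<noteq> (\<lambda>v. 0)"
    and orthonormal: "\<forall>i\<in>{1..CARD('n)}. \<forall>j\<in>{1..CARD('n)}.
        metric_at h p (e i) (e j) = (if i = j then 1 else 0)"
    and maximal: "\<forall>u. metric_at h p u u = 1 \<longrightarrow>
        metric_at h p (K_at (diff_tensor G hG) p u u) u
        \<le> metric_at h p (K_at (diff_tensor G hG) p (e 1) (e 1)) (e 1)"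
    and eigen: "\<forall>i\<in>{1..CARD('n)}. K_at (diff_tensor G hG) p (e 1) (e i) = lam i *\<^sub>R e i"
    and bound: "\<forall>i\<in>{2..CARD('n)}. lam 1 \<ge> 2 * lam i \<and>
        (lam 1 = 2 * lam i \<longrightarrow> metric_at h p (K_at (diff_tensor G hG) p (e i) (e i)) (e i) = 0)"
    and ordered: "\<forall>i j. 2 \<le> i \<and> i \<le> j \<and> j \<le> CARD('n) \<longrightarrow> lam i \<le> lam j"
  shows "\<not> (\<exists>m::nat. 2 \<le> m \<and> m \<le> CARD('n) - 1 \<and>
            (\<forall>i\<in>{2..m}. lam i = lam 2) \<and> lam m < lam (m + 1) \<and>
            (\<forall>i\<in>{m+1..CARD('n)}. lam i = lam (CARD('n))))"
proof
  assume "\<exists>m::nat. 2 \<le> m \<and> m \<le> CARD('n) - 1 \<and>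
            (\<forall>i\<in>{2..m}. lam i = lam 2) \<and> lam m < lam (m + 1) \<and>
            (\<forall>i\<in>{m+1..CARD('n)}. lam i = lam (CARD('n)))"
  then obtain m :: nat where m: "2 \<le> m" "m \<le> CARD('n) - 1" "\<forall>i\<in>{2..m}. lam i = lam 2"
    "lam m < lam (m + 1)" "\<forall>i\<in>{m+1..CARD('n)}. lam i = lam (CARD('n))"
    by blast
  interpret isotropic_chart U x eps G hG h mu
  proof
    show "cov_deriv_K hG (diff_tensor G hG) l k i j q = mu q * hsym (\<lambda>i j. h i j q) l k i j"
      if "q \<in> U" for q l k i j
      using cond that unfolding hsym_def by blast
  qed (use hyp smooth_h smooth_G smooth_hG LC smooth_mu in auto)
  interpret isotropic_eigenframe "\<lambda>i j. h i j p" "\<lambda>k i j. diff_tensor G hG k i j p"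
      "frechet_derivative mu (at p)" eps e lam
    by (rule isotropic_eigenframe_at[OF pU orthonormal eigen])
  have "2 \<in> {2..CARD('n)}" "CARD('n) \<in> {2..CARD('n)}" using m(1,2) by auto
  then have "lam 1 = 3 * lam 2" "lam 1 = 3 * lam (CARD('n))"
    by (blast intro: first_eigenvalue_triple[OF dmu])+
  moreover have "m \<in> {2..m}" "m + 1 \<in> {m+1..CARD('n)}" using m(1,2) by auto
  then have "lam m = lam 2" "lam (m + 1) = lam (CARD('n))" using m(3,5) by blast+
  ultimately show False using m(4) by simp
qed

end
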